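(* Let $(\mathcal A,\gamma,\phi)$ be a $\mathbb Z_2$-graded noncommutative probability space with the graded-tensor-product exchangeability system, let $X_1,\dots,X_n\in\mathcal A$ be homogeneous of degree $1$ and let $\pi\in\Pi_n$. Then $$\phi_\pi(X_1,\dots,X_n)=(-1)^{c_0(\pi)}\prod_{B\in\pi}\phi\Big(\prod_{i\in B}X_i\Big),\qquad K_\pi(X_1,\dots,X_n)=(-1)^{c_0(\pi)}\prod_{B\in\pi}K_{|B|}(X_i:i\in B),$$ with products and sequences within each block taken in increasing order of indices.
   Context: A $\mathbb Z_2$-graded noncommutative probability space $(\mathcal A,\gamma,\phi)$ consists of a complex unital algebra $\mathcal A=\mathcal A_+\oplus\mathcal A_-$ graded by an algebra automorphism $\gamma$ of order 2 and a unital linear functional $\phi$ with $\phi\circ\gamma=\phi$; homogeneous $X$ have degree $\partial X=0$ on $\mathcal A_+$, $1$ on $\mathcal A_-$. The graded tensor product of graded algebras is the tensor product with multiplication $(X_1\otimes X_2)(X_1'\otimes X_2')=(-1)^{\partial X_2\,\partial X_1'}X_1X_1'\otimes X_2X_2'$ on homogeneous elements and functional $\phi_1\otimes\phi_2$. The exchangeability system: $\mathcal U$ is the infinite graded tensor product of copies of $\mathcal A$ with product functional $\tilde\phi$, $X^{(k)}$ the copy of $X$ in the $k$-th factor. For a partition $\sigma$ of $[n]$, $\phi_\sigma(X_1,\dots,X_n)=\tilde\phi(X_1^{(i_1)}\cdots X_n^{(i_n)})$ for any indices with $i_j=i_l\iff j,l$ in the same block of $\sigma$; $K_\pi=\sum_{\sigma\le\pi}\phi_\sigma\mu(\sigma,\pi)$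 with $\mu$ the Möbius function of the refinement lattice $\Pi_n$, and $K_m=K_{\hat1_m}$ for the one-block partition. For $\pi=\{B_1,\dots,B_p\}$ with $\min B_1<\dots<\min B_p$ and blocks $A,B$ with $\min A<\min B$, $c_0(A,B)=\#\{(a,b):a\in A,b\in B,\min B<a<b\}$, and $c_0(\pi)=\sum_{i<j}c_0(B_i,B_j)$. *)

theory Defs
  imports Complex_Main "HOL-Library.Disjoint_Sets"
begin

text \<open>A complex unital algebra is modelled as a type of class ring_1 (unital, not necessarily
commutative ring) together with a complex scalar action sm satisfying the algebra axioms.  A_+ = {X. gam X = X}, A_- = {X. gam X = - X}.\<close>

definition complex_algebra :: "(complex \<Rightarrow> 'a::ring_1 \<Rightarrow> 'a) \<Rightarrow> bool" where
  "complex_algebra sm \<longleftrightarrow>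
     (\<forall>a x y. sm a (x + y) = sm a x + sm a y) \<and>
     (\<forall>a b x. sm (a + b) x = sm a x + sm b x) \<and>
     (\<forall>a b x. sm (a * b) x = sm a (sm b x)) \<and>
     (\<forall>x. sm 1 x = x) \<and>
     (\<forall>a x y. sm a (x * y) = sm a x * y) \<and>
     (\<forall>a x y. sm a (x * y) = x * sm a y)"

definition graded_ncps ::
  "(complex \<Rightarrow> 'a::ring_1 \<Rightarrow> 'a) \<Rightarrow> ('a \<Rightarrow> 'a) \<Rightarrow> ('a \<Rightarrow> complex) \<Rightarrow> bool" where
  "graded_ncps sm gam phi \<longleftrightarrow>
     complex_algebra sm \<and>
     \<comment> \<open>gam is a unital algebra automorphism of order 2\<close>
     (\<forall>x y. gam (x + y) = gam x + gam y) \<and>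
     (\<forall>a x. gam (sm a x) = sm a (gam x)) \<and>
     (\<forall>x y. gam (x * y) = gam x * gam y) \<and>
     gam 1 = 1 \<and>
     (\<forall>x. gam (gam x) = x) \<and> gam \<noteq> id \<and>
     \<comment> \<open>phi is a unital linear functional, invariant under gam\<close>
     (\<forall>x y. phi (x + y) = phi x + phi y) \<and>
     (\<forall>a x. phi (sm a x) = a * phi x) \<and>
     phi 1 = 1 \<and>
     (\<forall>x. phi (gam x) = phi x)"

definition gdeg :: "('a \<Rightarrow> 'a) \<Rightarrow> 'a \<Rightarrow> nat" where
  "gdeg gam x = (if gam x = x then 0 else 1)"

text \<open>An elementary tensor c * (a_1 (x) a_2 (x) ...) of homogeneous elements, with a_k = 1 for all
but finitely many k, is represented by the pair (c, a).  Multiplication follows the graded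
tensor product rule: moving the factor b_l past a_k (k > l) produces the sign
(-1)^(deg a_k * deg b_l).\<close>

type_synonym 'a etensor = "complex \<times> (nat \<Rightarrow> 'a)"

definition gt_one :: "'a::ring_1 etensor" where
  "gt_one = (1, \<lambda>_. 1)"

definition gt_copy :: "'a::ring_1 \<Rightarrow> nat \<Rightarrow> 'a etensor" where
  "gt_copy x k = (1, (\<lambda>_. 1)(k := x))"

definition gt_mult :: "('a::ring_1 \<Rightarrow> 'a) \<Rightarrow> 'a etensor \<Rightarrow> 'a etensor \<Rightarrow> 'a etensor" where
  "gt_mult gam t s =
     (fst t * fst s *
        (-1) ^ card {(k, l). l < k \<and> gdeg gam (snd t k) = 1 \<and> gdeg gam (snd s l) = 1},
      \<lambda>k. snd t k * snd s k)"

definition gt_state :: "('a::ring_1 \<Rightarrow> complex) \<Rightarrow> 'a etensor \<Rightarrow> complex" where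
  "gt_state phi t = fst t * (\<Prod>k\<in>{k. snd t k \<noteq> 1}. phi (snd t k))"

definition gt_prod :: "('a::ring_1 \<Rightarrow> 'a) \<Rightarrow> 'a etensor list \<Rightarrow> 'a etensor" where
  "gt_prod gam ts = foldl (gt_mult gam) gt_one ts"

definition set_partitions :: "nat \<Rightarrow> nat set set set" where
  "set_partitions n = {P. partition_on {1..n} P}"

definition refines :: "'b set set \<Rightarrow> 'b set set \<Rightarrow> bool" where
  "refines s p \<longleftrightarrow> (\<forall>B\<in>s. \<exists>C\<in>p. B \<subseteq> C)"

definition moebius :: "'b set \<Rightarrow> ('b \<Rightarrow> 'b \<Rightarrow> bool) \<Rightarrow> 'b \<Rightarrow> 'b \<Rightarrow> int" where
  "moebius S le = (THE m.
      (\<forall>x y. \<not> (x \<in> S \<and> y \<in> S \<and> le x y) \<longrightarrow> m x y = 0) \<and>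
      (\<forall>x\<in>S. \<forall>y\<in>S. le x y \<longrightarrow>
          (\<Sum>z\<in>{z\<in>S. le x z \<and> le z y}. m x z) = (if x = y then 1 else 0)))"

definition block_of :: "'b set set \<Rightarrow> 'b \<Rightarrow> 'b set" where
  "block_of s j = (THE B. B \<in> s \<and> j \<in> B)"

text \<open>phi_sigma(X_1,...,X_n) = phi-tilde(X_1^(i_1) ... X_n^(i_n)), with the admissible choice of
indices i_j = min of the block of sigma containing j (i_j = i_l iff j, l in the same block).\<close>
definition phi_part ::
  "('a::ring_1 \<Rightarrow> 'a) \<Rightarrow> ('a \<Rightarrow> complex) \<Rightarrow> nat \<Rightarrow> nat set set \<Rightarrow> (nat \<Rightarrow> 'a) \<Rightarrow> complex" where
  "phi_part gam phi n s X =
     gt_state phi (gt_prod gam (map (\<lambda>j. gt_copy (X j) (Min (block_of s j))) [1..<n+1]))"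

definition K_part ::
  "('a::ring_1 \<Rightarrow> 'a) \<Rightarrow> ('a \<Rightarrow> complex) \<Rightarrow> nat \<Rightarrow> nat set set \<Rightarrow> (nat \<Rightarrow> 'a) \<Rightarrow> complex" where
  "K_part gam phi n p X =
     (\<Sum>s\<in>{s\<in>set_partitions n. refines s p}.
        phi_part gam phi n s X * of_int (moebius (set_partitions n) refines s p))"

text \<open>K_m = K of the one-block partition of [m] (for m = 0 the only partition is the empty one).\<close>
definition K_num :: "('a::ring_1 \<Rightarrow> 'a) \<Rightarrow> ('a \<Rightarrow> complex) \<Rightarrow> nat \<Rightarrow> (nat \<Rightarrow> 'a) \<Rightarrow> complex" where
  "K_num gam phi m X = K_part gam phi m {{1..m}} X"

definition c0_pair :: "nat set \<Rightarrow> nat set \<Rightarrow> nat" where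
  "c0_pair A B = card {(a, b). a \<in> A \<and> b \<in> B \<and> Min B < a \<and> a < b}"

definition c0 :: "nat set set \<Rightarrow> nat" where
  "c0 p = (\<Sum>(A, B)\<in>{(A, B). A \<in> p \<and> B \<in> p \<and> Min A < Min B}. c0_pair A B)"

end

theory Submission
  imports Defs
begin

text \<open>
  In the graded tensor product a copy of an odd element picks up a sign for every odd factor
  that it has to pass. Placing \<open>X\<^sub>j\<close> into the slot \<open>Min B\<close> of its block \<open>B\<close>, the state
  \<open>\<phi>\<^sub>\<pi>\<close> becomes a signed product of the values of \<open>\<phi>\<close> on the block products. If one of these
  values vanishes, both sides are zero; otherwise all blocks have even size, no partial slot
  product vanishes, and the sign is \<open>-1\<close> to the number of inversions of \<open>j \<mapsto> Min B\<^sub>j\<close>,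
  which has the parity of \<open>c\<^sub>0(\<pi>)\<close>.

  For the cumulants, the interval below \<open>\<pi>\<close> in the partition lattice is the product of the
  partition lattices of the blocks of \<open>\<pi>\<close>, so the Moebius function factorizes. The same
  inversion count splits the sign of \<open>\<phi>\<^sub>\<sigma>\<close>, for \<open>\<sigma>\<close> finer than \<open>\<pi>\<close>, into \<open>(-1)^c\<^sub>0(\<pi>)\<close> times
  the signs of the partitions induced on the blocks, and summing over \<open>\<sigma>\<close> gives the product
  of the block cumulants.
\<close>

section \<open>Moebius functions of finite posets\<close>

definition poset_on :: "'b set \<Rightarrow> ('b \<Rightarrow> 'b \<Rightarrow> bool) \<Rightarrow> bool" where
  "poset_on S le \<longleftrightarrow> (\<forall>x\<in>S. le x x) \<and> (\<forall>x\<in>S. \<forall>y\<in>S. le x y \<longrightarrow> le y x \<longrightarrow> x = y)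
     \<and> (\<forall>x\<in>S. \<forall>y\<in>S. \<forall>z\<in>S. le x y \<longrightarrow> le y z \<longrightarrow> le x z)"

definition is_moebius :: "'b set \<Rightarrow> ('b \<Rightarrow> 'b \<Rightarrow> bool) \<Rightarrow> ('b \<Rightarrow> 'b \<Rightarrow> int) \<Rightarrow> bool" where
  "is_moebius S le m \<longleftrightarrow>
      (\<forall>x y. \<not> (x \<in> S \<and> y \<in> S \<and> le x y) \<longrightarrow> m x y = 0) \<and>
      (\<forall>x\<in>S. \<forall>y\<in>S. le x y \<longrightarrow>
          (\<Sum>z\<in>{z\<in>S. le x z \<and> le z y}. m x z) = (if x = y then 1 else 0))"

lemma poset_refl: "poset_on S le \<Longrightarrow> x \<in> S \<Longrightarrow> le x x"
  unfolding poset_on_def by blast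

lemma poset_antisym: "poset_on S le \<Longrightarrow> x \<in> S \<Longrightarrow> y \<in> S \<Longrightarrow> le x y \<Longrightarrow> le y x \<Longrightarrow> x = y"
  unfolding poset_on_def by blast

lemma poset_trans:
  "poset_on S le \<Longrightarrow> x \<in> S \<Longrightarrow> y \<in> S \<Longrightarrow> z \<in> S \<Longrightarrow> le x y \<Longrightarrow> le y z \<Longrightarrow> le x z"
  unfolding poset_on_def by blast

lemma poset_on_subset: "poset_on S le \<Longrightarrow> T \<subseteq> S \<Longrightarrow> poset_on T le"
  unfolding poset_on_def by (meson subsetD)

context
  fixes S :: "'b set" and le :: "'b \<Rightarrow> 'b \<Rightarrow> bool"
  assumes fin: "finite S" and poset: "poset_on S le"
begin

lemma interval_eq_insert_top:
  assumes "y \<in> S" "le x y"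
  shows "{z\<in>S. le x z \<and> le z y} = insert y {z\<in>S. le x z \<and> le z y \<and> z \<noteq> y}"
  using assms poset_refl[OF poset] by auto

lemma card_interval_less:
  assumes "x \<in> S" "y \<in> S" "z \<in> S" "le x z" "le z y" "z \<noteq> y"
  shows "card {w\<in>S. le x w \<and> le w z} < card {w\<in>S. le x w \<and> le w y}"
proof (rule psubset_card_mono)
  have "le x y" using assms poset_trans[OF poset, of x z y] by blast
  then show "{w\<in>S. le x w \<and> le w z} \<subset> {w\<in>S. le x w \<and> le w y}"
    using assms poset_refl[OF poset, of y] poset_trans[OF poset, of _ z y] poset_antisym[OF poset, of y z] by blast
qed (use fin in simp)

lemma is_moebius_unique:
  assumes m: "is_moebius S le m" and m': "is_moebius S le m'"
  shows "m = m'"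
proof (intro ext)
  fix x y
  show "m x y = m' x y"
  proof (induction "card {z\<in>S. le x z \<and> le z y}" arbitrary: y rule: less_induct)
    case less
    show ?case
    proof (cases "x \<in> S \<and> y \<in> S \<and> le x y")
      case True
      define I where "I = {z\<in>S. le x z \<and> le z y \<and> z \<noteq> y}"
      have "finite I" "y \<notin> I" using fin by (auto simp: I_def)
      have IH: "m x z = m' x z" if "z \<in> I" for z
        using that less.hyps card_interval_less True by (auto simp: I_def)
      have "(\<Sum>z\<in>{z\<in>S. le x z \<and> le z y}. m x z) = (\<Sum>z\<in>{z\<in>S. le x z \<and> le z y}. m' x z)"
        using m m' True by (simp add: is_moebius_def)
      then have "(\<Sum>z\<in>insert y I. m x z) = (\<Sum>z\<in>insert y I. m' x z)"
        using interval_eq_insert_top[of y x] True by (simp add: I_def)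
      moreover have "(\<Sum>z\<in>I. m x z) = (\<Sum>z\<in>I. m' x z)"
        using IH by (rule sum.cong[OF refl])
      ultimately show ?thesis using \<open>finite I\<close> \<open>y \<notin> I\<close> by simp
    next
      case False
      then show ?thesis using m m' by (simp add: is_moebius_def)
    qed
  qed
qed

text \<open>The recursion \<open>\<mu>(x,y) = - \<Sum>\<^bsub>x \<le> z < y\<^esub> \<mu>(x,z)\<close>, cut off by a fuel parameter
  that is eventually larger than the length of every interval.\<close>
fun moebius_fuel :: "nat \<Rightarrow> 'b \<Rightarrow> 'b \<Rightarrow> int" where
  "moebius_fuel 0 x y = 0"
| "moebius_fuel (Suc k) x y =
     (if x \<in> S \<and> y \<in> S \<and> le x y then
        (if x = y then 1 else - (\<Sum>z\<in>{z\<in>S. le x z \<and> le z y \<and> z \<noteq> y}. moebius_fuel k x z))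
      else 0)"

lemma moebius_fuel_stable:
  "card {z\<in>S. le x z \<and> le z y} \<le> k \<Longrightarrow> k \<le> k' \<Longrightarrow> moebius_fuel k x y = moebius_fuel k' x y"
proof (induction k arbitrary: k' y)
  case 0
  then have "\<not> (x \<in> S \<and> y \<in> S \<and> le x y)"
    using fin poset_refl[OF poset] by (auto simp: card_eq_0_iff)
  then show ?case by (cases k') auto
next
  case (Suc k)
  then obtain k'' where k'': "k' = Suc k''" "k \<le> k''" by (cases k') auto
  show ?case
  proof (cases "x \<in> S \<and> y \<in> S \<and> le x y")
    case True
    have "moebius_fuel k x z = moebius_fuel k'' x z" if "z \<in> S" "le x z" "le z y" "z \<noteq> y" for z
      using Suc.IH[of z k''] Suc.prems card_interval_less[of x y z] True that k'' by simp
    then show ?thesis unfolding k'' by (auto intro!: sum.cong)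
  qed (auto simp: k'')
qed

lemma is_moebius_fuel: "is_moebius S le (moebius_fuel (card S))"
  unfolding is_moebius_def
proof (intro conjI allI impI ballI)
  fix x y assume "\<not> (x \<in> S \<and> y \<in> S \<and> le x y)"
  then show "moebius_fuel (card S) x y = 0" by (cases "card S") auto
next
  fix x y assume xy: "x \<in> S" "y \<in> S" "le x y"
  then obtain N where N: "card S = Suc N"
    using fin by (cases "card S") auto
  define I where "I = {z\<in>S. le x z \<and> le z y \<and> z \<noteq> y}"
  have "finite I" "y \<notin> I" using fin by (auto simp: I_def)
  have stable: "moebius_fuel N x z = moebius_fuel (Suc N) x z" if "z \<in> I" for z
  proof (rule moebius_fuel_stable)
    have "card {w\<in>S. le x w \<and> le w z} < card {w\<in>S. le x w \<and> le w y}"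
      using that xy card_interval_less by (auto simp: I_def)
    also have "\<dots> \<le> card S" using fin by (intro card_mono) auto
    finally show "card {w\<in>S. le x w \<and> le w z} \<le> N" using N by simp
  qed simp
  show "(\<Sum>z\<in>{z\<in>S. le x z \<and> le z y}. moebius_fuel (card S) x z) = (if x = y then 1 else 0)"
  proof (cases "x = y")
    case True
    then have "{z\<in>S. le x z \<and> le z y} = {x}" using xy poset_antisym[OF poset] poset_refl[OF poset] by auto
    then show ?thesis using True xy N by simp
  next
    case False
    have "(\<Sum>z\<in>{z\<in>S. le x z \<and> le z y}. moebius_fuel (card S) x z)
        = moebius_fuel (Suc N) x y + (\<Sum>z\<in>I. moebius_fuel (Suc N) x z)"
      using interval_eq_insert_top[OF xy(2,3)] \<open>finite I\<close> \<open>y \<notin> I\<close> N by (simp add: I_def)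
    also have "\<dots> = 0"
      using xy False stable by (simp add: I_def)
    finally show ?thesis using False by simp
  qed
qed

lemma moebius_eqI: "is_moebius S le m \<Longrightarrow> moebius S le = m"
  unfolding moebius_def is_moebius_def[symmetric]
  using is_moebius_unique by blast

lemma is_moebius_moebius: "is_moebius S le (moebius S le)"
  using moebius_eqI[OF is_moebius_fuel] is_moebius_fuel by simp

end

lemma moebius_convex_subset:
  assumes fin: "finite S" and poset: "poset_on S le" and T: "T \<subseteq> S"
    and convex: "\<And>x y z. x \<in> T \<Longrightarrow> y \<in> T \<Longrightarrow> z \<in> S \<Longrightarrow> le x z \<Longrightarrow> le z y \<Longrightarrow> z \<in> T"
    and "x \<in> T" "y \<in> T"
  shows "moebius T le x y = moebius S le x y"
proof -
  have "is_moebius T le (\<lambda>x y. if x \<in> T \<and> y \<in> T then moebius S le x y else 0)"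
    unfolding is_moebius_def
  proof (intro conjI allI impI ballI)
    fix u v assume "\<not> (u \<in> T \<and> v \<in> T \<and> le u v)"
    then show "(if u \<in> T \<and> v \<in> T then moebius S le u v else 0) = 0"
      using is_moebius_moebius[OF fin poset] T unfolding is_moebius_def by auto
  next
    fix u v assume uv: "u \<in> T" "v \<in> T" "le u v"
    have interval: "{w\<in>T. le u w \<and> le w v} = {w\<in>S. le u w \<and> le w v}"
      using uv T convex by blast
    have "(\<Sum>w\<in>{w\<in>T. le u w \<and> le w v}. if u \<in> T \<and> w \<in> T then moebius S le u w else 0)
        = (\<Sum>w\<in>{w\<in>S. le u w \<and> le w v}. moebius S le u w)" (is "?sum = _")
      using uv interval by (intro sum.cong) auto
    also have "\<dots> = (if u = v then 1 else 0)"
      using is_moebius_moebius[OF fin poset] uv T unfolding is_moebius_def by blast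
    finally show "?sum = (if u = v then 1 else 0)" .
  qed
  then show ?thesis
    using moebius_eqI[OF finite_subset[OF T fin] poset_on_subset[OF poset T]] assms(5,6) by auto
qed

lemma poset_on_order_iso:
  assumes poset: "poset_on S le" and bij: "bij_betw f S S'"
    and iso: "\<And>x y. x \<in> S \<Longrightarrow> y \<in> S \<Longrightarrow> le' (f x) (f y) \<longleftrightarrow> le x y"
  shows "poset_on S' le'"
  using bij_betw_imp_surj_on[OF bij] unfolding poset_on_def
  by (auto simp: iso intro: poset_refl[OF poset] poset_trans[OF poset]) (metis poset_antisym[OF poset])

lemma moebius_order_iso:
  assumes fin: "finite S" and poset: "poset_on S le" and bij: "bij_betw f S S'"
    and iso: "\<And>x y. x \<in> S \<Longrightarrow> y \<in> S \<Longrightarrow> le' (f x) (f y) \<longleftrightarrow> le x y"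
    and "x \<in> S" "y \<in> S"
  shows "moebius S' le' (f x) (f y) = moebius S le x y"
proof -
  have S': "S' = f ` S" and inj: "inj_on f S"
    using bij by (auto simp: bij_betw_def)
  have "poset_on S' le'"
    using poset bij iso by (rule poset_on_order_iso)
  then have \<mu>': "is_moebius S' le' (moebius S' le')"
    using fin S' by (intro is_moebius_moebius) auto
  have interval: "{w\<in>S'. le' (f u) w \<and> le' w (f v)} = f ` {z\<in>S. le u z \<and> le z v}"
    if "u \<in> S" "v \<in> S" for u v
    using that iso unfolding S' by auto
  have "is_moebius S le (\<lambda>x y. if x \<in> S \<and> y \<in> S then moebius S' le' (f x) (f y) else 0)"
    unfolding is_moebius_def
  proof (intro conjI allI impI ballI)
    fix u v assume "\<not> (u \<in> S \<and> v \<in> S \<and> le u v)"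
    then show "(if u \<in> S \<and> v \<in> S then moebius S' le' (f u) (f v) else 0) = 0"
      using \<mu>' iso unfolding is_moebius_def S' by auto
  next
    fix u v assume uv: "u \<in> S" "v \<in> S" "le u v"
    have "(\<Sum>z\<in>{z\<in>S. le u z \<and> le z v}. if u \<in> S \<and> z \<in> S then moebius S' le' (f u) (f z) else 0)
        = (\<Sum>z\<in>{z\<in>S. le u z \<and> le z v}. moebius S' le' (f u) (f z))" (is "?sum = _")
      using uv by (intro sum.cong) auto
    also have "\<dots> = (\<Sum>w\<in>{w\<in>S'. le' (f u) w \<and> le' w (f v)}. moebius S' le' (f u) w)"
      unfolding interval[OF uv(1,2)] using inj_on_subset[OF inj, of "{z\<in>S. le u z \<and> le z v}"]
      by (simp add: sum.reindex)
    also have "\<dots> = (if u = v then 1 else 0)"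
      using \<mu>' uv iso inj unfolding is_moebius_def S' by (auto dest: inj_onD)
    finally show "?sum = (if u = v then 1 else 0)" .
  qed
  then show ?thesis using moebius_eqI[OF fin poset] assms(5,6) by auto
qed

lemma poset_on_PiE:
  assumes "\<And>i. i \<in> I \<Longrightarrow> poset_on (S i) (le i)"
  shows "poset_on (PiE I S) (\<lambda>x y. \<forall>i\<in>I. le i (x i) (y i))"
  unfolding poset_on_def
proof (intro conjI ballI impI)
  fix x y assume "x \<in> PiE I S" "y \<in> PiE I S" "\<forall>i\<in>I. le i (x i) (y i)" "\<forall>i\<in>I. le i (y i) (x i)"
  then show "x = y"
    using poset_antisym[OF assms] by (intro PiE_ext) (auto simp: PiE_iff)
qed (use poset_refl[OF assms] poset_trans[OF assms] in \<open>auto simp: PiE_iff\<close>)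

lemma is_moebius_PiE:
  assumes "finite I" "\<And>i. i \<in> I \<Longrightarrow> finite (S i)"
    and m: "\<And>i. i \<in> I \<Longrightarrow> is_moebius (S i) (le i) (m i)"
  shows "is_moebius (PiE I S) (\<lambda>x y. \<forall>i\<in>I. le i (x i) (y i))
    (\<lambda>x y. if x \<in> PiE I S \<and> y \<in> PiE I S then \<Prod>i\<in>I. m i (x i) (y i) else 0)"
  unfolding is_moebius_def
proof (intro conjI allI impI ballI)
  fix u v assume uv: "\<not> (u \<in> PiE I S \<and> v \<in> PiE I S \<and> (\<forall>i\<in>I. le i (u i) (v i)))"
  show "(if u \<in> PiE I S \<and> v \<in> PiE I S then \<Prod>i\<in>I. m i (u i) (v i) else 0) = 0"
  proof (cases "u \<in> PiE I S \<and> v \<in> PiE I S")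
    case True
    then obtain i where "i \<in> I" "\<not> le i (u i) (v i)" using uv by auto
    then show ?thesis using m \<open>finite I\<close> by (auto simp: is_moebius_def intro: prod_zero)
  qed auto
next
  fix u v assume uv: "u \<in> PiE I S" "v \<in> PiE I S" "\<forall>i\<in>I. le i (u i) (v i)"
  let ?interval = "\<lambda>i. {z\<in>S i. le i (u i) z \<and> le i z (v i)}"
  have "{w\<in>PiE I S. (\<forall>i\<in>I. le i (u i) (w i)) \<and> (\<forall>i\<in>I. le i (w i) (v i))} = PiE I ?interval"
    by (auto simp: PiE_iff extensional_def)
  then have "(\<Sum>w\<in>{w\<in>PiE I S. (\<forall>i\<in>I. le i (u i) (w i)) \<and> (\<forall>i\<in>I. le i (w i) (v i))}.
        if u \<in> PiE I S \<and> w \<in> PiE I S then \<Prod>i\<in>I. m i (u i) (w i) else 0)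
      = (\<Sum>w\<in>PiE I ?interval. \<Prod>i\<in>I. m i (u i) (w i))" (is "?sum = _")
    using uv by (intro sum.cong) (auto simp: PiE_iff)
  also have "\<dots> = (\<Prod>i\<in>I. \<Sum>z\<in>?interval i. m i (u i) z)"
    using assms(1,2) by (simp add: prod_sum_PiE)
  also have "\<dots> = (\<Prod>i\<in>I. if u i = v i then 1 else 0)"
  proof (rule prod.cong[OF refl])
    fix i assume i: "i \<in> I"
    then have "u i \<in> S i" "v i \<in> S i" "le i (u i) (v i)"
      using uv by (auto simp: PiE_iff)
    then show "(\<Sum>z\<in>?interval i. m i (u i) z) = (if u i = v i then 1 else 0)"
      using m[OF i] unfolding is_moebius_def by blast
  qed
  also have "\<dots> = (if u = v then 1 else 0)"
    using uv \<open>finite I\<close> PiE_ext[of u I S v] by (auto intro: prod_zero)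
  finally show "?sum = (if u = v then 1 else 0)" .
qed

lemma moebius_PiE:
  assumes "finite I" and fin: "\<And>i. i \<in> I \<Longrightarrow> finite (S i)"
    and poset: "\<And>i. i \<in> I \<Longrightarrow> poset_on (S i) (le i)"
    and "x \<in> PiE I S" "y \<in> PiE I S"
  shows "moebius (PiE I S) (\<lambda>x y. \<forall>i\<in>I. le i (x i) (y i)) x y
         = (\<Prod>i\<in>I. moebius (S i) (le i) (x i) (y i))"
proof -
  have "finite (PiE I S)"
    using assms by (intro finite_PiE) auto
  moreover have "poset_on (PiE I S) (\<lambda>x y. \<forall>i\<in>I. le i (x i) (y i))"
    using poset by (rule poset_on_PiE)
  moreover have "is_moebius (PiE I S) (\<lambda>x y. \<forall>i\<in>I. le i (x i) (y i))
      (\<lambda>x y. if x \<in> PiE I S \<and> y \<in> PiE I S then \<Prod>i\<in>I. moebius (S i) (le i) (x i) (y i) else 0)"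
    using assms(1,2) is_moebius_moebius[OF fin poset] by (rule is_moebius_PiE)
  ultimately have "moebius (PiE I S) (\<lambda>x y. \<forall>i\<in>I. le i (x i) (y i))
      = (\<lambda>x y. if x \<in> PiE I S \<and> y \<in> PiE I S then \<Prod>i\<in>I. moebius (S i) (le i) (x i) (y i) else 0)"
    by (rule moebius_eqI)
  then show ?thesis using assms(4,5) by simp
qed

section \<open>Ranks in finite linearly ordered sets\<close>

definition rank :: "'a::linorder set \<Rightarrow> 'a \<Rightarrow> nat" where
  "rank B x = Suc (card {b\<in>B. b < x})"

definition unrank :: "'a::linorder set \<Rightarrow> nat \<Rightarrow> 'a" where
  "unrank B t = sorted_list_of_set B ! (t - 1)"

lemma sorted_list_of_set_strict_mono_on_image:
  fixes f :: "'a::linorder \<Rightarrow> 'b::linorder"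
  assumes "finite C" and "strict_mono_on C f"
  shows "sorted_list_of_set (f ` C) = map f (sorted_list_of_set C)"
proof (rule sorted_list_of_set_unique[THEN iffD1])
  have "sorted_wrt (\<lambda>x y. f x < f y) (sorted_list_of_set C)"
    by (rule sorted_wrt_mono_rel[OF _ strict_sorted_list_of_set])
      (use assms in \<open>auto dest: strict_mono_onD\<close>)
  then show "sorted_wrt (<) (map f (sorted_list_of_set C)) \<and> set (map f (sorted_list_of_set C)) = f ` C
      \<and> length (map f (sorted_list_of_set C)) = card (f ` C)"
    using assms strict_mono_on_imp_inj_on[OF assms(2)] by (simp add: sorted_wrt_map card_image)
qed (use assms in simp)

lemma mono_rank: "finite B \<Longrightarrow> mono (rank B)"
  unfolding rank_def by (intro monoI Suc_le_mono[THEN iffD2] card_mono) auto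

lemma strict_mono_on_rank: "finite B \<Longrightarrow> strict_mono_on B (rank B)"
proof (rule strict_mono_onI)
  fix x y assume "finite B" "x \<in> B" "y \<in> B" "x < y"
  then have "{b\<in>B. b < x} \<subset> {b\<in>B. b < y}" by auto
  then show "rank B x < rank B y"
    using \<open>finite B\<close> by (simp add: rank_def psubset_card_mono)
qed

lemma rank_image: "finite B \<Longrightarrow> rank B ` B = {1..card B}"
proof (rule card_subset_eq)
  assume "finite B"
  have "card {b\<in>B. b < x} < card B" if "x \<in> B" for x
    using that \<open>finite B\<close> by (intro psubset_card_mono) auto
  then show "rank B ` B \<subseteq> {1..card B}" by (auto simp: rank_def Suc_le_eq)
  show "card (rank B ` B) = card {1..card B}"
    using card_image[OF strict_mono_on_imp_inj_on[OF strict_mono_on_rank[OF \<open>finite B\<close>]]] by simp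
qed simp

lemma map_rank_sorted_list_of_set:
  "finite B \<Longrightarrow> map (rank B) (sorted_list_of_set B) = [1..<Suc (card B)]"
  using sorted_list_of_set_strict_mono_on_image[OF _ strict_mono_on_rank, of B]
  by (simp add: rank_image atLeastLessThanSuc_atLeastAtMost[symmetric])

lemma rank_unrank: "finite B \<Longrightarrow> t \<in> {1..card B} \<Longrightarrow> rank B (unrank B t) = t"
  using arg_cong[OF map_rank_sorted_list_of_set, of B "\<lambda>xs. xs ! (t - 1)"]
  by (subst (asm) nth_map) (auto simp: unrank_def nth_upt simp del: upt_Suc)

lemma unrank_in: "finite B \<Longrightarrow> t \<in> {1..card B} \<Longrightarrow> unrank B t \<in> B"
  using nth_mem[of "t - 1" "sorted_list_of_set B"] by (auto simp: unrank_def)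

lemma unrank_rank: "finite B \<Longrightarrow> x \<in> B \<Longrightarrow> unrank B (rank B x) = x"
  using rank_unrank[of B] unrank_in[of B] rank_image[of B]
    strict_mono_on_imp_inj_on[OF strict_mono_on_rank, of B]
  by (metis imageI inj_onD)

lemma bij_betw_rank: "finite B \<Longrightarrow> bij_betw (rank B) B {1..card B}"
  by (simp add: bij_betw_def rank_image strict_mono_on_imp_inj_on strict_mono_on_rank)

lemma bij_betw_unrank: "finite B \<Longrightarrow> bij_betw (unrank B) {1..card B} B"
  by (rule bij_betw_byWitness[where f' = "rank B"])
    (auto simp: rank_unrank unrank_rank unrank_in rank_image)

section \<open>Set partitions and their refinement order\<close>

lemma partition_on_same_block:
  "partition_on A p \<Longrightarrow> B \<in> p \<Longrightarrow> C \<in> p \<Longrightarrow> x \<in> B \<Longrightarrow> x \<in> C \<Longrightarrow> B = C"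
  unfolding partition_on_def disjoint_def by (metis IntI empty_iff)

lemma partition_on_block_subset: "partition_on A p \<Longrightarrow> B \<in> p \<Longrightarrow> B \<subseteq> A"
  by (metis Union_upper partition_onD1)

lemma block_of_eq: "partition_on A p \<Longrightarrow> B \<in> p \<Longrightarrow> x \<in> B \<Longrightarrow> block_of p x = B"
  unfolding block_of_def by (rule the_equality) (auto dest: partition_on_same_block)

lemma block_of_in: "partition_on A p \<Longrightarrow> x \<in> A \<Longrightarrow> block_of p x \<in> p"
  and mem_block_of: "partition_on A p \<Longrightarrow> x \<in> A \<Longrightarrow> x \<in> block_of p x"
  by (metis UnionE block_of_eq partition_onD1)+

lemma set_partitions_partition_on: "p \<in> set_partitions n \<Longrightarrow> partition_on {1..n} p"
  by (simp add: set_partitions_def)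

lemma finite_set_partitions: "finite (set_partitions n)"
  unfolding set_partitions_def by (simp add: finitely_many_partition_on)

lemma finite_set_partition: "p \<in> set_partitions n \<Longrightarrow> finite p"
  by (rule finite_elements[OF _ set_partitions_partition_on]) simp

lemma set_partition_block_subset: "p \<in> set_partitions n \<Longrightarrow> B \<in> p \<Longrightarrow> B \<subseteq> {1..n}"
  by (metis partition_on_block_subset set_partitions_partition_on)

lemma set_partition_block_finite: "p \<in> set_partitions n \<Longrightarrow> B \<in> p \<Longrightarrow> finite B"
  by (meson finite_atLeastAtMost finite_subset set_partition_block_subset)

lemma set_partition_block_nonempty: "p \<in> set_partitions n \<Longrightarrow> B \<in> p \<Longrightarrow> B \<noteq> {}"
  using partition_onD3[OF set_partitions_partition_on] by blast

lemma refines_iff_Disjoint_Sets_refines: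
  "s \<in> set_partitions n \<Longrightarrow> p \<in> set_partitions n \<Longrightarrow> refines s p \<longleftrightarrow> Disjoint_Sets.refines {1..n} s p"
  by (simp add: set_partitions_def Defs.refines_def Disjoint_Sets.refines_def)

lemma refines_order_trans: "refines s p \<Longrightarrow> refines p q \<Longrightarrow> refines s q"
  unfolding Defs.refines_def by (meson subset_trans)

lemma poset_on_set_partitions: "poset_on (set_partitions n) refines"
  unfolding poset_on_def
proof (intro conjI ballI impI)
  fix s :: "nat set set"
  show "refines s s" unfolding Defs.refines_def by blast
next
  fix s p q :: "nat set set"
  assume "refines s p" "refines p q"
  then show "refines s q" by (rule refines_order_trans)
next
  fix s p assume "s \<in> set_partitions n" "p \<in> set_partitions n" "refines s p" "refines p s"
  then show "s = p"
    by (meson refines_asym refines_iff_Disjoint_Sets_refines)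
qed

lemma partition_on_bij_image:
  assumes "bij_betw f A A'" and "partition_on A P"
  shows "partition_on A' ((`) f ` P)"
proof -
  have "partition_on (f ` A) ((`) f ` P - {{}})"
    using assms by (intro partition_on_inj_image) (auto simp: bij_betw_def)
  moreover have "(`) f ` P - {{}} = (`) f ` P"
    using partition_onD3[OF assms(2)] by blast
  ultimately show ?thesis using assms(1) by (simp add: bij_betw_def)
qed

lemma partition_on_UN:
  assumes p: "partition_on A p" and Q: "\<And>B. B \<in> p \<Longrightarrow> partition_on B (Q B)"
  shows "partition_on A (\<Union>B\<in>p. Q B)"
proof (rule partition_onI)
  show "\<Union>(\<Union>B\<in>p. Q B) = A"
    using partition_onD1[OF p] partition_onD1[OF Q] by blast
  show "{} \<notin> (\<Union>B\<in>p. Q B)"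
    using partition_onD3[OF Q] by blast
  fix D D' assume "D \<in> (\<Union>B\<in>p. Q B)" "D' \<in> (\<Union>B\<in>p. Q B)" "D \<noteq> D'"
  then obtain B B' where B: "B \<in> p" "D \<in> Q B" and B': "B' \<in> p" "D' \<in> Q B'" by blast
  show "disjnt D D'"
  proof (cases "B = B'")
    case True
    then show ?thesis
      using B B' \<open>D \<noteq> D'\<close> pairwiseD[OF partition_onD2[OF Q[OF B(1)]]] by blast
  next
    case False
    then have "disjnt B B'"
      using B B' pairwiseD[OF partition_onD2[OF p]] by blast
    moreover have "D \<subseteq> B" "D' \<subseteq> B'"
      using B B' partition_on_block_subset[OF Q] by blast+
    ultimately show ?thesis by (meson disjnt_subset1 disjnt_subset2)
  qed
qed

text \<open>Restricting to the blocks \<open>B\<close> of \<open>p\<close> and relabelling each of them monotonically onto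
  \<open>{1..card B}\<close> identifies the partitions finer than \<open>p\<close> with the families of partitions of
  the sets \<open>{1..card B}\<close>; \<open>glue_partitions\<close> is the inverse map.\<close>

definition induced_partition :: "nat set set \<Rightarrow> nat set \<Rightarrow> nat set set" where
  "induced_partition s B = (`) (rank B) ` {C\<in>s. C \<subseteq> B}"

definition glue_partitions :: "nat set set \<Rightarrow> (nat set \<Rightarrow> nat set set) \<Rightarrow> nat set set" where
  "glue_partitions p t = (\<Union>B\<in>p. (`) (unrank B) ` t B)"

context
  fixes n :: nat and p :: "nat set set"
  assumes p: "p \<in> set_partitions n"
begin

lemma refines_unique_block:
  assumes "s \<in> set_partitions n" "C \<in> s" "B \<in> p" "B' \<in> p" "C \<subseteq> B" "C \<subseteq> B'"
  shows "B = B'"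
  using assms set_partition_block_nonempty[of s n C]
    partition_on_same_block[OF set_partitions_partition_on[OF p], of B B'] by blast

lemma partition_on_blocks_below:
  assumes "s \<in> set_partitions n" "refines s p" "B \<in> p"
  shows "partition_on B {C\<in>s. C \<subseteq> B}"
proof -
  have "Disjoint_Sets.refines {1..n} s p"
    using assms p refines_iff_Disjoint_Sets_refines by blast
  then show ?thesis using assms(3) by (rule refines_obtains_subset)
qed

lemma induced_partition_in:
  assumes "s \<in> set_partitions n" "refines s p" "B \<in> p"
  shows "induced_partition s B \<in> set_partitions (card B)"
  unfolding set_partitions_def induced_partition_def
  using partition_on_bij_image[OF bij_betw_rank partition_on_blocks_below] assms
    set_partition_block_finite[OF p] by simp

lemma partition_on_unrank_image:
  assumes "t \<in> set_partitions (card B)" "B \<in> p"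
  shows "partition_on B ((`) (unrank B) ` t)"
  using assms
  by (intro partition_on_bij_image[OF bij_betw_unrank])
    (auto simp: set_partitions_def set_partition_block_finite[OF p])

lemma glue_partitions_in:
  assumes "t \<in> PiE p (\<lambda>B. set_partitions (card B))"
  shows "glue_partitions p t \<in> set_partitions n" and "refines (glue_partitions p t) p"
proof -
  have part: "partition_on B ((`) (unrank B) ` t B)" if "B \<in> p" for B
    using assms that by (intro partition_on_unrank_image) auto
  then show "glue_partitions p t \<in> set_partitions n"
    unfolding set_partitions_def glue_partitions_def
    using partition_on_UN[OF set_partitions_partition_on[OF p]] by simp
  show "refines (glue_partitions p t) p"
    unfolding Defs.refines_def glue_partitions_def
  proof
    fix C assume "C \<in> (\<Union>B\<in>p. (`) (unrank B) ` t B)"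
    then obtain B where "B \<in> p" "C \<in> (`) (unrank B) ` t B" by blast
    then show "\<exists>B\<in>p. C \<subseteq> B" using partition_on_block_subset[OF part] by blast
  qed
qed

lemma glue_partitions_restrict: "glue_partitions p (restrict t p) = glue_partitions p t"
  by (simp add: glue_partitions_def)

lemma glue_induced_partition:
  assumes "s \<in> set_partitions n" "refines s p"
  shows "glue_partitions p (induced_partition s) = s"
proof -
  have "(`) (unrank B) ` induced_partition s B = {C\<in>s. C \<subseteq> B}" if "B \<in> p" for B
  proof -
    have "(`) (unrank B) ` induced_partition s B = (\<lambda>C. unrank B ` rank B ` C) ` {C\<in>s. C \<subseteq> B}"
      unfolding induced_partition_def by (simp add: image_comp o_def)
    also have "\<dots> = (\<lambda>C. C) ` {C\<in>s. C \<subseteq> B}"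
      using unrank_rank[OF set_partition_block_finite[OF p \<open>B \<in> p\<close>]]
      by (intro image_cong) (auto simp: image_image subset_iff)
    finally show ?thesis by simp
  qed
  then show ?thesis
    using assms unfolding glue_partitions_def Defs.refines_def by auto
qed

lemma blocks_below_glue_partitions:
  assumes t: "t \<in> PiE p (\<lambda>B. set_partitions (card B))" and B: "B \<in> p"
  shows "{C\<in>glue_partitions p t. C \<subseteq> B} = (`) (unrank B) ` t B"
proof (intro equalityI subsetI)
  have part: "partition_on B' ((`) (unrank B') ` t B')" if "B' \<in> p" for B'
    using t that by (intro partition_on_unrank_image) auto
  fix C
  assume "C \<in> {C\<in>glue_partitions p t. C \<subseteq> B}"
  then obtain B' where B': "B' \<in> p" "C \<in> (`) (unrank B') ` t B'" and "C \<subseteq> B"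
    unfolding glue_partitions_def by blast
  obtain x where "x \<in> C"
    using partition_onD3[OF part[OF B'(1)]] B'(2) by blast
  moreover have "C \<subseteq> B'"
    using partition_on_block_subset[OF part[OF B'(1)] B'(2)] .
  ultimately have "B' = B"
    using partition_on_same_block[OF set_partitions_partition_on[OF p] B'(1) B] \<open>C \<subseteq> B\<close> by blast
  then show "C \<in> (`) (unrank B) ` t B" using B' by simp
next
  fix C assume C: "C \<in> (`) (unrank B) ` t B"
  have "t B \<in> set_partitions (card B)" using t B by blast
  then have "C \<subseteq> B"
    using partition_on_block_subset[OF partition_on_unrank_image[OF _ B] C] by blast
  then show "C \<in> {C\<in>glue_partitions p t. C \<subseteq> B}"
    using B C unfolding glue_partitions_def by blast
qed

lemma induced_glue_partitions:
  assumes t: "t \<in> PiE p (\<lambda>B. set_partitions (card B))" and B: "B \<in> p"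
  shows "induced_partition (glue_partitions p t) B = t B"
proof -
  have "rank B ` unrank B ` D = D" if "D \<in> t B" for D
  proof -
    have "D \<subseteq> {1..card B}"
      using t B that set_partition_block_subset[of "t B" "card B" D] by (simp add: PiE_iff)
    then have "rank B ` unrank B ` D = (\<lambda>x. x) ` D"
      unfolding image_image using rank_unrank[OF set_partition_block_finite[OF p B]]
      by (intro image_cong) auto
    then show ?thesis by simp
  qed
  then have "(\<lambda>D. rank B ` unrank B ` D) ` t B = (\<lambda>D. D) ` t B"
    by (intro image_cong) auto
  then show ?thesis
    unfolding induced_partition_def blocks_below_glue_partitions[OF t B] image_comp o_def by simp
qed

lemma induced_partition_mono:
  assumes s: "s \<in> set_partitions n" and "refines s' p" "refines s s'" "B \<in> p"
  shows "refines (induced_partition s B) (induced_partition s' B)"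
proof -
  have "\<exists>C'\<in>s'. C' \<subseteq> B \<and> C \<subseteq> C'" if "C \<in> s" "C \<subseteq> B" for C
  proof -
    obtain C' where C': "C' \<in> s'" "C \<subseteq> C'"
      using \<open>refines s s'\<close> \<open>C \<in> s\<close> unfolding Defs.refines_def by blast
    moreover obtain B' where "B' \<in> p" "C' \<subseteq> B'"
      using \<open>refines s' p\<close> C'(1) unfolding Defs.refines_def by blast
    moreover have "B' = B"
      using refines_unique_block[OF s \<open>C \<in> s\<close> \<open>B' \<in> p\<close> \<open>B \<in> p\<close>] C'(2) \<open>C' \<subseteq> B'\<close> \<open>C \<subseteq> B\<close>
      by blast
    ultimately show ?thesis by blast
  qed
  then show ?thesis
    unfolding Defs.refines_def induced_partition_def by (fastforce intro: image_mono)
qed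

lemma refines_if_induced_partitions_refine:
  assumes "refines s p" and induced: "\<forall>B\<in>p. refines (induced_partition s B) (induced_partition s' B)"
  shows "refines s s'"
  unfolding Defs.refines_def
proof
  fix C assume "C \<in> s"
  then obtain B where B: "B \<in> p" "C \<subseteq> B"
    using \<open>refines s p\<close> unfolding Defs.refines_def by blast
  then obtain C' where C': "C' \<in> s'" "C' \<subseteq> B" "rank B ` C \<subseteq> rank B ` C'"
    using induced \<open>C \<in> s\<close> unfolding Defs.refines_def induced_partition_def by blast
  have inj: "inj_on (rank B) B"
    using strict_mono_on_imp_inj_on[OF strict_mono_on_rank[OF set_partition_block_finite[OF p B(1)]]] .
  have "C \<subseteq> C'"
  proof
    fix c assume "c \<in> C"
    then have "rank B c \<in> rank B ` C'" using C'(3) by blast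
    then show "c \<in> C'" using inj_on_image_mem_iff[OF inj] \<open>c \<in> C\<close> B(2) C'(2) by blast
  qed
  then show "\<exists>C'\<in>s'. C \<subseteq> C'" using C'(1) by blast
qed

lemma refines_iff_induced_partitions:
  assumes "s \<in> set_partitions n" "refines s p" "refines s' p"
  shows "refines s s' \<longleftrightarrow> (\<forall>B\<in>p. refines (induced_partition s B) (induced_partition s' B))"
  using assms induced_partition_mono refines_if_induced_partitions_refine by blast

lemma bij_betw_induced_partitions:
  "bij_betw (\<lambda>s. restrict (induced_partition s) p) {s\<in>set_partitions n. refines s p}
     (PiE p (\<lambda>B. set_partitions (card B)))"
proof (rule bij_betw_byWitness[where f' = "glue_partitions p"])
  show "\<forall>t\<in>PiE p (\<lambda>B. set_partitions (card B)). restrict (induced_partition (glue_partitions p t)) p = t"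
  proof
    fix t assume t: "t \<in> PiE p (\<lambda>B. set_partitions (card B))"
    have "restrict (induced_partition (glue_partitions p t)) p = restrict t p"
      using induced_glue_partitions[OF t] by (rule restrict_ext)
    also have "\<dots> = t" using t by (rule PiE_restrict)
    finally show "restrict (induced_partition (glue_partitions p t)) p = t" .
  qed
qed (auto simp: glue_partitions_restrict glue_induced_partition induced_partition_in glue_partitions_in)

lemma induced_partition_self:
  assumes "B \<in> p"
  shows "induced_partition p B = {{1..card B}}"
proof -
  have "{C\<in>p. C \<subseteq> B} = {B}"
    using assms refines_unique_block[OF p, of C B C for C] by auto
  then show ?thesis
    unfolding induced_partition_def using rank_image[OF set_partition_block_finite[OF p assms]] by simp
qed

lemma moebius_set_partitions_factor:
  assumes s: "s \<in> set_partitions n" "refines s p"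
  shows "moebius (set_partitions n) refines s p
         = (\<Prod>B\<in>p. moebius (set_partitions (card B)) refines (induced_partition s B) {{1..card B}})"
proof -
  let ?below = "{s\<in>set_partitions n. refines s p}"
  let ?le = "\<lambda>t t'. \<forall>B\<in>p. refines (t B) (t' B)"
  have p_below: "p \<in> ?below" using p by (auto simp: Defs.refines_def)
  have "moebius (set_partitions n) refines s p = moebius ?below refines s p"
  proof (rule moebius_convex_subset[OF finite_set_partitions poset_on_set_partitions, symmetric])
    show "z \<in> ?below" if "x \<in> ?below" "y \<in> ?below" "z \<in> set_partitions n" "refines x z" "refines z y"
      for x y z
      using that refines_order_trans[of z y p] by blast
  qed (use s p_below in simp_all)
  also have "\<dots> = moebius (PiE p (\<lambda>B. set_partitions (card B))) ?le
      (restrict (induced_partition s) p) (restrict (induced_partition p) p)"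
  proof (rule moebius_order_iso[symmetric])
    show "finite ?below" by (simp add: finite_set_partitions)
    show "poset_on ?below refines" by (rule poset_on_subset[OF poset_on_set_partitions]) blast
    show "?le (restrict (induced_partition x) p) (restrict (induced_partition y) p) \<longleftrightarrow> refines x y"
      if "x \<in> ?below" "y \<in> ?below" for x y
      using that refines_iff_induced_partitions[of x y] by simp
    show "bij_betw (\<lambda>s. restrict (induced_partition s) p) ?below (PiE p (\<lambda>B. set_partitions (card B)))"
      by (rule bij_betw_induced_partitions)
  qed (use s p_below in simp_all)
  also have "\<dots> = (\<Prod>B\<in>p. moebius (set_partitions (card B)) refines
      (restrict (induced_partition s) p B) (restrict (induced_partition p) p B))"
    using bij_betw_apply[OF bij_betw_induced_partitions] s p_below
    by (intro moebius_PiE finite_set_partition[OF p] finite_set_partitions poset_on_set_partitions)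
      blast+
  also have "\<dots> = (\<Prod>B\<in>p. moebius (set_partitions (card B)) refines
      (induced_partition s B) {{1..card B}})"
    by (intro prod.cong) (simp_all add: induced_partition_self)
  finally show ?thesis .
qed

end

section \<open>Crossings and inversions\<close>

definition block_min :: "nat set set \<Rightarrow> nat \<Rightarrow> nat" where
  "block_min p j = Min (block_of p j)"

definition inversions :: "nat set \<Rightarrow> (nat \<Rightarrow> nat) \<Rightarrow> nat" where
  "inversions I f = card {(i, j). i \<in> I \<and> j \<in> I \<and> i < j \<and> f j < f i}"

lemma neg_one_power_eqI: "even (a + b) \<Longrightarrow> (-1::'a::ring_1) ^ a = (-1) ^ b"
  by (auto simp: minus_one_power_iff)

lemma card_eq_sum_card_fibres:
  "finite S \<Longrightarrow> finite T \<Longrightarrow> g ` S \<subseteq> T \<Longrightarrow> card S = (\<Sum>y\<in>T. card {x\<in>S. g x = y})"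
  using sum.group[of S T g "\<lambda>_. 1 :: nat"] by simp

lemma c0_pair_parity:
  assumes "finite A" "finite B" "A \<inter> B = {}" "even (card B)"
  shows "even (c0_pair A B + card {(i, j). i \<in> B \<and> j \<in> A \<and> i < j})"
proof -
  define below where "below = {(a, b). a \<in> A \<and> b \<in> B \<and> Min B < a \<and> a < b}"
  define above where "above = {(a, b). a \<in> A \<and> b \<in> B \<and> b < a}"
  have "card {(i, j). i \<in> B \<and> j \<in> A \<and> i < j} = card above"
    unfolding above_def by (rule bij_betw_same_card[of prod.swap]) (auto simp: bij_betw_def image_iff)
  moreover have "Min B < a" if "b \<in> B" "b < a" for a b
    using Min_le[OF assms(2) that(1)] that(2) by linarith
  then have "below \<union> above = {a\<in>A. Min B < a} \<times> B" "below \<inter> above = {}"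
    using assms(3) by (auto simp: below_def above_def)
  moreover have "finite below" "finite above"
    using assms(1,2) by (auto intro: finite_subset[of _ "A \<times> B"] simp: below_def above_def)
  ultimately have "c0_pair A B + card {(i, j). i \<in> B \<and> j \<in> A \<and> i < j} = card {a\<in>A. Min B < a} * card B"
    by (simp add: c0_pair_def below_def[symmetric] card_Un_disjoint[symmetric] card_cartesian_product)
  then show ?thesis using assms(4) by simp
qed

lemma even_card_union_of_fibres:
  assumes "finite I" "F \<subseteq> I"
    and closed: "\<And>i j. i \<in> F \<Longrightarrow> j \<in> I \<Longrightarrow> f j = f i \<Longrightarrow> j \<in> F"
    and even: "\<And>i. i \<in> I \<Longrightarrow> even (card {j\<in>I. f j = f i})"
  shows "even (card F)"
proof -
  have "finite F" using assms(1,2) by (rule finite_subset[rotated])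
  then have "card F = (\<Sum>c\<in>f ` F. card {j\<in>F. f j = c})"
    by (intro card_eq_sum_card_fibres) auto
  moreover have "{j\<in>F. f j = f i} = {j\<in>I. f j = f i}" if "i \<in> F" for i
    using that assms(2) closed by blast
  ultimately show ?thesis
    using even assms(2) by (auto intro!: dvd_sum)
qed

lemma inversions_image:
  assumes mono: "strict_mono_on J h" and "I \<subseteq> J" "f ` I \<subseteq> J"
    and conj: "\<And>i. i \<in> I \<Longrightarrow> g (h i) = h (f i)"
  shows "inversions (h ` I) g = inversions I f"
proof -
  have less: "h x < h y \<longleftrightarrow> x < y" if "x \<in> J" "y \<in> J" for x y
    using strict_mono_on_less[OF mono that] .
  have "{(i, j). i \<in> h ` I \<and> j \<in> h ` I \<and> i < j \<and> g j < g i}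
      = map_prod h h ` {(i, j). i \<in> I \<and> j \<in> I \<and> i < j \<and> f j < f i}"
  proof (intro equalityI subsetI)
    fix x assume "x \<in> {(i, j). i \<in> h ` I \<and> j \<in> h ` I \<and> i < j \<and> g j < g i}"
    then obtain a b where ab: "a \<in> I" "b \<in> I" "x = (h a, h b)" "h a < h b" "h (f b) < h (f a)"
      using conj by auto
    then have "a < b" "f b < f a"
      using less assms(2,3) by (auto simp: subset_iff)
    then show "x \<in> map_prod h h ` {(i, j). i \<in> I \<and> j \<in> I \<and> i < j \<and> f j < f i}"
      using ab by auto
  next
    fix x assume "x \<in> map_prod h h ` {(i, j). i \<in> I \<and> j \<in> I \<and> i < j \<and> f j < f i}"
    then obtain a b where ab: "a \<in> I" "b \<in> I" "x = (h a, h b)" "a < b" "f b < f a"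
      by auto
    then have "h a < h b" "h (f b) < h (f a)"
      using less assms(2,3) by (auto simp: subset_iff)
    then show "x \<in> {(i, j). i \<in> h ` I \<and> j \<in> h ` I \<and> i < j \<and> g j < g i}"
      using ab conj by auto
  qed
  moreover have "inj_on (map_prod h h) {(i, j). i \<in> I \<and> j \<in> I \<and> i < j \<and> f j < f i}"
    using strict_mono_on_imp_inj_on[OF mono] assms(2)
    by (auto simp: inj_on_def subset_iff)
  ultimately show ?thesis
    unfolding inversions_def by (simp add: card_image)
qed

lemma card_add_card_eq_card_symdiff:
  assumes "finite P" "finite Q"
  shows "card P + card Q = card ((P \<union> Q) - (P \<inter> Q)) + 2 * card (P \<inter> Q)"
proof -
  have "card (P \<inter> Q) \<le> card (P \<union> Q)"
    using assms by (intro card_mono) auto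
  then show ?thesis
    using assms card_Un_Int[OF assms] card_Diff_subset[of "P \<inter> Q" "P \<union> Q"]
    by (simp add: Int_Un_distrib2 le_supI1)
qed

lemma card_pairs_reorient:
  fixes f :: "'a::linorder \<Rightarrow> 'b::linorder"
  assumes sym: "\<And>i j. i \<in> I \<Longrightarrow> j \<in> I \<Longrightarrow> R i j \<Longrightarrow> R j i"
    and neq: "\<And>i j. i \<in> I \<Longrightarrow> j \<in> I \<Longrightarrow> R i j \<Longrightarrow> f i \<noteq> f j"
  shows "card {(i, j). i \<in> I \<and> j \<in> I \<and> i < j \<and> R i j} = card {(i, j). i \<in> I \<and> j \<in> I \<and> f i < f j \<and> R i j}"
    (is "card ?E = card ?E'")
proof (rule bij_betw_same_card[of "\<lambda>(i, j). if f i < f j then (i, j) else (j, i)"])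
  show "bij_betw (\<lambda>(i, j). if f i < f j then (i, j) else (j, i)) ?E ?E'"
  proof (rule bij_betw_byWitness[where f' = "\<lambda>(i, j). (min i j, max i j)"])
    show "(\<lambda>(i, j). if f i < f j then (i, j) else (j, i)) ` ?E \<subseteq> ?E'"
    proof
      fix y assume "y \<in> (\<lambda>(i, j). if f i < f j then (i, j) else (j, i)) ` ?E"
      then obtain a b where ab: "a \<in> I" "b \<in> I" "R a b" "y = (if f a < f b then (a, b) else (b, a))"
        by auto
      then have "f b < f a" if "\<not> f a < f b"
        using neq[OF ab(1-3)] that by simp
      then show "y \<in> ?E'"
        using ab sym[OF ab(1-3)] by (cases "f a < f b") simp_all
    qed
    show "(\<lambda>(i, j). (min i j, max i j)) ` ?E' \<subseteq> ?E"
    proof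
      fix y assume "y \<in> (\<lambda>(i, j). (min i j, max i j)) ` ?E'"
      then obtain a b where ab: "a \<in> I" "b \<in> I" "f a < f b" "R a b" "y = (min a b, max a b)"
        by auto
      then have "a \<noteq> b" by auto
      then show "y \<in> ?E"
        using ab sym[OF ab(1,2,4)] by (cases "a < b") (auto simp: min_def max_def)
    qed
  qed (auto simp: min_def max_def)
qed

text \<open>The pairs on which \<open>f\<close> and \<open>g\<close> disagree are counted, after orienting them along \<open>f\<close>,
  by the pairs \<open>f i < f j\<close> with \<open>g j < g i\<close>; for fixed \<open>i\<close> these form a union of
  \<open>f\<close>-classes.\<close>

lemma inversions_parity_coarsening:
  fixes f g :: "nat \<Rightarrow> nat"
  assumes "finite I"
    and coarser: "\<And>i j. i \<in> I \<Longrightarrow> j \<in> I \<Longrightarrow> f i = f j \<Longrightarrow> g i = g j"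
    and even: "\<And>i. i \<in> I \<Longrightarrow> even (card {j\<in>I. f j = f i})"
  shows "even (card {(i, j). i \<in> I \<and> j \<in> I \<and> i < j \<and> g i \<noteq> g j \<and> f j < f i} + inversions I g)"
proof -
  define P where "P = {(i, j). i \<in> I \<and> j \<in> I \<and> i < j \<and> g i \<noteq> g j \<and> f j < f i}"
  define Q where "Q = {(i, j). i \<in> I \<and> j \<in> I \<and> i < j \<and> g j < g i}"
  define disc where "disc = (\<lambda>i j. g i \<noteq> g j \<and> (f i < f j \<longleftrightarrow> g j < g i))"
  have f_neq: "f i \<noteq> f j" if "i \<in> I" "j \<in> I" "g i \<noteq> g j" for i j
    using coarser that by blast
  have "finite P" "finite Q"
    using \<open>finite I\<close> by (auto intro: finite_subset[of _ "I \<times> I"] simp: P_def Q_def)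
  then have "card P + card Q = card ((P \<union> Q) - (P \<inter> Q)) + 2 * card (P \<inter> Q)"
    by (rule card_add_card_eq_card_symdiff)
  also have "(P \<union> Q) - (P \<inter> Q) = {(i, j). i \<in> I \<and> j \<in> I \<and> i < j \<and> disc i j}"
    using f_neq by (auto simp: P_def Q_def disc_def linorder_neq_iff)
  also have "card \<dots> = card {(i, j). i \<in> I \<and> j \<in> I \<and> f i < f j \<and> disc i j}"
  proof (rule card_pairs_reorient)
    show "disc j i" if "i \<in> I" "j \<in> I" "disc i j" for i j
      using that f_neq[of i j] unfolding disc_def by auto
    show "f i \<noteq> f j" if "i \<in> I" "j \<in> I" "disc i j" for i j
      using that f_neq unfolding disc_def by blast
  qed
  also have "{(i, j). i \<in> I \<and> j \<in> I \<and> f i < f j \<and> disc i j} = Sigma I (\<lambda>i. {j\<in>I. f i < f j \<and> g j < g i})"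
    by (auto simp: disc_def)
  finally have "card P + card Q = card (Sigma I (\<lambda>i. {j\<in>I. f i < f j \<and> g j < g i})) + 2 * card (P \<inter> Q)" .
  moreover have "even (card {j\<in>I. f i < f j \<and> g j < g i})" if "i \<in> I" for i
  proof (rule even_card_union_of_fibres[OF \<open>finite I\<close> _ _ even])
    fix j j' assume "j \<in> {j\<in>I. f i < f j \<and> g j < g i}" "j' \<in> I" "f j' = f j"
    then show "j' \<in> {j\<in>I. f i < f j \<and> g j < g i}" using coarser[of j' j] by auto
  qed auto
  ultimately show ?thesis
    using \<open>finite I\<close> unfolding P_def[symmetric] inversions_def Q_def[symmetric] by (simp add: dvd_sum)
qed

lemma inversions_eq_sum:
  "inversions {1..n} f = (\<Sum>k<n. card {i\<in>{1..k}. f (Suc k) < f i})"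
proof -
  define S where "S = {(i, j). i \<in> {1..n} \<and> j \<in> {1..n} \<and> i < j \<and> f j < f i}"
  have "finite S" by (auto intro: finite_subset[of _ "{1..n} \<times> {1..n}"] simp: S_def)
  then have "card S = (\<Sum>j\<in>{1..n}. card {x\<in>S. snd x = j})"
    by (intro card_eq_sum_card_fibres) (auto simp: S_def)
  also have "\<dots> = (\<Sum>j\<in>{1..n}. card {i\<in>{1..<j}. f j < f i})"
  proof (rule sum.cong[OF refl])
    fix j assume "j \<in> {1..n}"
    then have "{x\<in>S. snd x = j} = (\<lambda>i. (i, j)) ` {i\<in>{1..<j}. f j < f i}"
      by (auto simp: S_def)
    then show "card {x\<in>S. snd x = j} = card {i\<in>{1..<j}. f j < f i}"
      by (simp add: card_image inj_on_def)
  qed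
  also have "\<dots> = (\<Sum>k<n. card {i\<in>{1..k}. f (Suc k) < f i})"
    by (simp add: sum.atLeast1_atMost_eq less_Suc_eq_le)
  finally show ?thesis by (simp add: inversions_def S_def)
qed

lemma card_odd_fibres_parity:
  fixes f :: "nat \<Rightarrow> nat"
  assumes "finite I"
  shows "even (card {a. v < a \<and> odd (card {i\<in>I. f i = a})} + card {i\<in>I. v < f i})"
proof -
  define A where "A = f ` {i\<in>I. v < f i}"
  have "finite A" using assms by (simp add: A_def)
  have "card {i\<in>I. v < f i} = (\<Sum>a\<in>A. card {i\<in>{i\<in>I. v < f i}. f i = a})"
    using assms \<open>finite A\<close> by (intro card_eq_sum_card_fibres) (auto simp: A_def)
  also have "\<dots> = (\<Sum>a\<in>A. card {i\<in>I. f i = a})"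
  proof (rule sum.cong[OF refl])
    fix a assume "a \<in> A"
    then have "{i\<in>{i\<in>I. v < f i}. f i = a} = {i\<in>I. f i = a}" by (auto simp: A_def)
    then show "card {i\<in>{i\<in>I. v < f i}. f i = a} = card {i\<in>I. f i = a}" by simp
  qed
  finally have "even (card {i\<in>I. v < f i}) \<longleftrightarrow> even (card {a\<in>A. odd (card {i\<in>I. f i = a})})"
    using even_sum_iff[OF \<open>finite A\<close>] by simp
  moreover have "a \<in> A" if "v < a" "odd (card {i\<in>I. f i = a})" for a
  proof -
    have "{i\<in>I. f i = a} \<noteq> {}" using that(2) by (intro notI) simp
    then show ?thesis using that(1) by (auto simp: A_def)
  qed
  then have "{a\<in>A. odd (card {i\<in>I. f i = a})} = {a. v < a \<and> odd (card {i\<in>I. f i = a})}"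
    by (auto simp: A_def)
  ultimately show ?thesis by simp
qed

context
  fixes n :: nat and p :: "nat set set"
  assumes p: "p \<in> set_partitions n"
begin

lemma Min_block_in: "B \<in> p \<Longrightarrow> Min B \<in> B"
  using set_partition_block_finite[OF p] set_partition_block_nonempty[OF p] by (rule Min_in)

lemma block_min_eq: "B \<in> p \<Longrightarrow> i \<in> B \<Longrightarrow> block_min p i = Min B"
  unfolding block_min_def using block_of_eq[OF set_partitions_partition_on[OF p]] by simp

lemma block_min_fibre:
  assumes "B \<in> p" "i \<in> B"
  shows "{j\<in>{1..n}. block_min p j = block_min p i} = B"
proof (intro equalityI subsetI)
  fix j assume j: "j \<in> {j\<in>{1..n}. block_min p j = block_min p i}"
  define C where "C = block_of p j"
  have j': "j \<in> {1..n}" using j by simp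
  have C: "C \<in> p" "j \<in> C"
    unfolding C_def using block_of_in[OF _ j'] mem_block_of[OF _ j'] set_partitions_partition_on[OF p]
    by simp_all
  have "Min C = Min B"
    using j block_min_eq[OF C] block_min_eq[OF assms] by simp
  then have "C = B"
    using Min_block_in[OF C(1)] Min_block_in[OF assms(1)]
      partition_on_same_block[OF set_partitions_partition_on[OF p] C(1) assms(1)] by simp
  then show "j \<in> B" using C by simp
next
  fix j assume "j \<in> B"
  then show "j \<in> {j\<in>{1..n}. block_min p j = block_min p i}"
    using assms set_partition_block_subset[OF p assms(1)] block_min_eq[OF assms(1)] by auto
qed

lemma block_min_fibre_block_of:
  assumes "i \<in> {1..n}"
  shows "{j\<in>{1..n}. block_min p j = block_min p i} = block_of p i"
proof -
  have part: "partition_on {1..n} p" by (rule set_partitions_partition_on[OF p])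
  show ?thesis by (rule block_min_fibre[OF block_of_in[OF part assms] mem_block_of[OF part assms]])
qed

text \<open>An inversion \<open>i < j\<close> of \<open>block_min p\<close> takes \<open>i\<close> from the block with the larger minimum.\<close>

lemma inversions_block_min:
  "inversions {1..n} (block_min p)
     = (\<Sum>(A, B)\<in>{(A, B). A \<in> p \<and> B \<in> p \<and> Min A < Min B}. card {(i, j). i \<in> B \<and> j \<in> A \<and> i < j})"
proof -
  have part: "partition_on {1..n} p" by (rule set_partitions_partition_on[OF p])
  define Idx where "Idx = {(A, B). A \<in> p \<and> B \<in> p \<and> Min A < Min B}"
  define Inv where "Inv = {(i, j). i \<in> {1..n} \<and> j \<in> {1..n} \<and> i < j \<and> block_min p j < block_min p i}"
  define blocks where "blocks = (\<lambda>(i::nat, j::nat). (block_of p j, block_of p i))"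
  have "finite Idx"
    using finite_set_partition[OF p] by (auto intro: finite_subset[of _ "p \<times> p"] simp: Idx_def)
  have "finite Inv"
    by (auto intro: finite_subset[of _ "{1..n} \<times> {1..n}"] simp: Inv_def)
  have "blocks ` Inv \<subseteq> Idx"
    using block_of_in[OF part] by (auto simp: blocks_def Inv_def Idx_def block_min_def)
  have fibre: "{x\<in>Inv. blocks x = (A, B)} = {(i, j). i \<in> B \<and> j \<in> A \<and> i < j}"
    if "(A, B) \<in> Idx" for A B
  proof (intro equalityI subsetI)
    fix x assume "x \<in> {x\<in>Inv. blocks x = (A, B)}"
    then obtain i j where "x = (i, j)" "i \<in> {1..n}" "j \<in> {1..n}" "i < j"
      "block_of p j = A" "block_of p i = B"
      by (auto simp: Inv_def blocks_def)
    then show "x \<in> {(i, j). i \<in> B \<and> j \<in> A \<and> i < j}"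
      using mem_block_of[OF part] by auto
  next
    fix x assume "x \<in> {(i, j). i \<in> B \<and> j \<in> A \<and> i < j}"
    then obtain i j where x: "x = (i, j)" "i \<in> B" "j \<in> A" "i < j" by auto
    have AB: "A \<in> p" "B \<in> p" "Min A < Min B" using that by (auto simp: Idx_def)
    have "i \<in> {1..n}" "j \<in> {1..n}"
      using x set_partition_block_subset[OF p AB(1)] set_partition_block_subset[OF p AB(2)] by auto
    moreover have "block_of p i = B" "block_of p j = A"
      using block_of_eq[OF part] AB x by auto
    moreover have "block_min p j < block_min p i"
      using block_min_eq[OF AB(1) x(3)] block_min_eq[OF AB(2) x(2)] AB(3) by simp
    ultimately show "x \<in> {x\<in>Inv. blocks x = (A, B)}"
      using x by (simp add: Inv_def blocks_def)
  qed
  have "inversions {1..n} (block_min p) = card Inv"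
    by (simp add: inversions_def Inv_def)
  also have "\<dots> = (\<Sum>AB\<in>Idx. card {x\<in>Inv. blocks x = AB})"
    by (rule card_eq_sum_card_fibres) fact+
  also have "\<dots> = (\<Sum>(A, B)\<in>Idx. card {(i, j). i \<in> B \<and> j \<in> A \<and> i < j})"
    using fibre by (intro sum.cong) auto
  finally show ?thesis by (simp add: Idx_def)
qed

lemma even_c0_plus_inversions:
  assumes even: "\<And>B. B \<in> p \<Longrightarrow> even (card B)"
  shows "even (c0 p + inversions {1..n} (block_min p))"
proof -
  have "even (c0_pair A B + card {(i, j). i \<in> B \<and> j \<in> A \<and> i < j})"
    if "A \<in> p" "B \<in> p" "Min A < Min B" for A B
  proof -
    have "A \<inter> B = {}"
      using that partition_on_same_block[OF set_partitions_partition_on[OF p] that(1,2)] by fastforce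
    then show ?thesis
      using c0_pair_parity[OF set_partition_block_finite[OF p that(1)] set_partition_block_finite[OF p that(2)]
          _ even[OF that(2)]] by blast
  qed
  then show ?thesis
    unfolding inversions_block_min c0_def sum.distrib[symmetric] by (intro dvd_sum) auto
qed

lemma block_min_eq_iff:
  assumes "i \<in> {1..n}" "j \<in> {1..n}"
  shows "block_min p j = block_min p i \<longleftrightarrow> (\<exists>B\<in>p. i \<in> B \<and> j \<in> B)"
proof -
  have part: "partition_on {1..n} p" by (rule set_partitions_partition_on[OF p])
  have B: "block_of p i \<in> p" "i \<in> block_of p i"
    using block_of_in[OF part assms(1)] mem_block_of[OF part assms(1)] .
  have "block_min p j = block_min p i \<longleftrightarrow> j \<in> block_of p i"
    using block_min_fibre[OF B] assms(2) by blast
  also have "\<dots> \<longleftrightarrow> (\<exists>B\<in>p. i \<in> B \<and> j \<in> B)"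
    using B partition_on_same_block[OF part] by blast
  finally show ?thesis .
qed

lemma inversions_same_block:
  "card {(i, j). i \<in> {1..n} \<and> j \<in> {1..n} \<and> i < j \<and> block_min p i = block_min p j \<and> f j < f i}
     = (\<Sum>B\<in>p. inversions B f)"
proof -
  have "{(i, j). i \<in> {1..n} \<and> j \<in> {1..n} \<and> i < j \<and> block_min p i = block_min p j \<and> f j < f i}
      = (\<Union>B\<in>p. {(i, j). i \<in> B \<and> j \<in> B \<and> i < j \<and> f j < f i})"
    using block_min_eq_iff set_partition_block_subset[OF p] by fastforce
  moreover have "finite {(i, j). i \<in> B \<and> j \<in> B \<and> i < j \<and> f j < f i}" if "B \<in> p" for B
    using set_partition_block_finite[OF p that]
    by (auto intro: finite_subset[of _ "B \<times> B"])
  moreover have "{(i, j). i \<in> B \<and> j \<in> B \<and> i < j \<and> f j < f i}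
      \<inter> {(i, j). i \<in> B' \<and> j \<in> B' \<and> i < j \<and> f j < f i} = {}"
    if "B \<in> p" "B' \<in> p" "B \<noteq> B'" for B B'
    using that partition_on_same_block[OF set_partitions_partition_on[OF p]] by blast
  ultimately show ?thesis
    using finite_set_partition[OF p] by (simp add: card_UN_disjoint inversions_def)
qed

lemma inversions_split_blocks:
  "inversions {1..n} f = (\<Sum>B\<in>p. inversions B f)
     + card {(i, j). i \<in> {1..n} \<and> j \<in> {1..n} \<and> i < j \<and> block_min p i \<noteq> block_min p j \<and> f j < f i}"
proof -
  let ?pairs = "\<lambda>P. {(i, j). i \<in> {1..n} \<and> j \<in> {1..n} \<and> i < j \<and> P i j \<and> f j < f i}"
  have "inversions {1..n} f = card (?pairs (\<lambda>i j. block_min p i = block_min p j)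
      \<union> ?pairs (\<lambda>i j. block_min p i \<noteq> block_min p j))"
    unfolding inversions_def by (rule arg_cong[where f = card]) auto
  also have "\<dots> = card (?pairs (\<lambda>i j. block_min p i = block_min p j))
      + card (?pairs (\<lambda>i j. block_min p i \<noteq> block_min p j))"
    by (intro card_Un_disjoint) (auto intro: finite_subset[of _ "{1..n} \<times> {1..n}"])
  finally show ?thesis by (simp only: inversions_same_block)
qed
end

context
  fixes n :: nat and p s :: "nat set set"
  assumes p: "p \<in> set_partitions n" and s: "s \<in> set_partitions n" and refines: "refines s p"
begin

lemma block_of_refinement_subset:
  assumes "B \<in> p" "i \<in> B"
  shows "block_of s i \<subseteq> B"
proof -
  have i: "i \<in> {1..n}" using set_partition_block_subset[OF p] assms by blast
  have C: "block_of s i \<in> s" "i \<in> block_of s i"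
    using block_of_in[OF _ i] mem_block_of[OF _ i] set_partitions_partition_on[OF s] by simp_all
  then obtain B' where "B' \<in> p" "block_of s i \<subseteq> B'"
    using refines unfolding Defs.refines_def by blast
  moreover have "B' = B"
    using partition_on_same_block[OF set_partitions_partition_on[OF p] \<open>B' \<in> p\<close> assms(1)]
      calculation(2) C(2) assms(2) by blast
  ultimately show ?thesis by simp
qed

lemma block_min_refinement:
  assumes "i \<in> {1..n}" "j \<in> {1..n}" "block_min s i = block_min s j"
  shows "block_min p i = block_min p j"
proof -
  have part: "partition_on {1..n} p" by (rule set_partitions_partition_on[OF p])
  define B where "B = block_of p i"
  have B: "B \<in> p" "i \<in> B"
    unfolding B_def using block_of_in[OF part assms(1)] mem_block_of[OF part assms(1)] by simp_all
  have "j \<in> {j\<in>{1..n}. block_min s j = block_min s i}"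
    using assms(2,3) by simp
  then have "j \<in> block_of s i"
    by (simp only: block_min_fibre_block_of[OF s assms(1)])
  then have "j \<in> B"
    using block_of_refinement_subset[OF B] by (rule subsetD[rotated])
  then show ?thesis
    using block_min_eq[OF p B(1)] B(2) by simp
qed

lemma even_blocks_coarsening:
  assumes even: "\<And>C. C \<in> s \<Longrightarrow> even (card C)" and "B \<in> p"
  shows "even (card B)"
proof (rule even_card_union_of_fibres[of "{1..n}" B "block_min s"])
  show "B \<subseteq> {1..n}" by (rule set_partition_block_subset[OF p \<open>B \<in> p\<close>])
  show "j \<in> B" if "i \<in> B" "j \<in> {1..n}" "block_min s j = block_min s i" for i j
    using that block_min_fibre_block_of[OF s, of i] block_of_refinement_subset[OF \<open>B \<in> p\<close>]
      \<open>B \<subseteq> {1..n}\<close> by blast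
  show "even (card {j\<in>{1..n}. block_min s j = block_min s i})" if "i \<in> {1..n}" for i
    unfolding block_min_fibre_block_of[OF s that]
    using even block_of_in[OF set_partitions_partition_on[OF s] that] by simp
qed simp

lemma block_min_induced_partition:
  assumes "B \<in> p" "i \<in> B"
  shows "block_min (induced_partition s B) (rank B i) = rank B (block_min s i)"
proof -
  have fin: "finite B" by (rule set_partition_block_finite[OF p \<open>B \<in> p\<close>])
  have i: "i \<in> {1..n}" using set_partition_block_subset[OF p] assms by blast
  define C where "C = block_of s i"
  have C: "C \<in> s" "i \<in> C" "C \<subseteq> B"
    unfolding C_def using block_of_in[OF _ i] mem_block_of[OF _ i] set_partitions_partition_on[OF s]
      block_of_refinement_subset[OF assms] by simp_all
  have "rank B ` C \<in> induced_partition s B"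
    unfolding induced_partition_def using C by blast
  then have "block_of (induced_partition s B) (rank B i) = rank B ` C"
    using block_of_eq[OF set_partitions_partition_on[OF induced_partition_in[OF p s refines \<open>B \<in> p\<close>]]] C(2)
    by blast
  moreover have "C \<noteq> {}" using C(2) by blast
  then have "Min (rank B ` C) = rank B (Min C)"
    using mono_Min_commute[OF mono_rank[OF fin] finite_subset[OF C(3) fin]] by simp
  ultimately show ?thesis by (simp add: block_min_def C_def)
qed

lemma inversions_induced_partition:
  assumes "B \<in> p"
  shows "inversions {1..card B} (block_min (induced_partition s B)) = inversions B (block_min s)"
proof -
  have fin: "finite B" by (rule set_partition_block_finite[OF p \<open>B \<in> p\<close>])
  have "block_min s i \<in> B" if "i \<in> B" for i
  proof -
    have "i \<in> {1..n}" using set_partition_block_subset[OF p assms] that by blast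
    then have "block_of s i \<in> s"
      using block_of_in[OF set_partitions_partition_on[OF s]] by blast
    then show ?thesis
      unfolding block_min_def
      using Min_block_in[OF s] block_of_refinement_subset[OF assms that] by blast
  qed
  then have "inversions (rank B ` B) (block_min (induced_partition s B)) = inversions B (block_min s)"
    by (intro inversions_image[OF strict_mono_on_rank[OF fin] order_refl])
      (auto simp: block_min_induced_partition[OF assms])
  then show ?thesis by (simp add: rank_image[OF fin])
qed

lemma even_induced_partition_blocks:
  assumes even: "\<And>C. C \<in> s \<Longrightarrow> even (card C)" and "B \<in> p" "D \<in> induced_partition s B"
  shows "even (card D)"
proof -
  obtain C where "C \<in> s" "C \<subseteq> B" "D = rank B ` C"
    using assms(3) unfolding induced_partition_def by blast
  moreover have "inj_on (rank B) C"
    using strict_mono_on_imp_inj_on[OF strict_mono_on_rank[OF set_partition_block_finite[OF p \<open>B \<in> p\<close>]]]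
      \<open>C \<subseteq> B\<close> by (rule inj_on_subset)
  ultimately show ?thesis using even by (simp add: card_image)
qed

lemma even_crossing_inversions_plus_inversions:
  assumes even: "\<And>C. C \<in> s \<Longrightarrow> even (card C)"
  shows "even (card {(i, j). i \<in> {1..n} \<and> j \<in> {1..n} \<and> i < j
      \<and> block_min p i \<noteq> block_min p j \<and> block_min s j < block_min s i} + inversions {1..n} (block_min p))"
proof (rule inversions_parity_coarsening)
  show "block_min p i = block_min p j"
    if "i \<in> {1..n}" "j \<in> {1..n}" "block_min s i = block_min s j" for i j
    using block_min_refinement that .
  show "even (card {j\<in>{1..n}. block_min s j = block_min s i})" if "i \<in> {1..n}" for i
    unfolding block_min_fibre_block_of[OF s that]
    using even block_of_in[OF set_partitions_partition_on[OF s] that] by simp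
qed simp

text \<open>Split the inversions of \<open>block_min s\<close> into those inside the blocks of \<open>p\<close>, which are the
  inversions of the induced partitions, and those across blocks, which have the parity of the
  inversions of \<open>block_min p\<close>.\<close>

theorem c0_sign_refinement:
  assumes even: "\<And>C. C \<in> s \<Longrightarrow> even (card C)"
  shows "(-1::'a::comm_ring_1) ^ c0 s = (-1) ^ c0 p * (\<Prod>B\<in>p. (-1) ^ c0 (induced_partition s B))"
proof -
  have "even (c0 s + inversions {1..n} (block_min s))"
    by (rule even_c0_plus_inversions[OF s even])
  moreover have "even (c0 p + inversions {1..n} (block_min p))"
    by (rule even_c0_plus_inversions[OF p even_blocks_coarsening[OF even]])
  moreover note inversions_split_blocks[OF p, of "block_min s"]
    even_crossing_inversions_plus_inversions[OF even]
  moreover have "even (c0 (induced_partition s B) + inversions B (block_min s))" if "B \<in> p" for B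
    using even_c0_plus_inversions[OF induced_partition_in[OF p s refines that]]
      even_induced_partition_blocks[OF even that] inversions_induced_partition[OF that] by simp
  then have "even ((\<Sum>B\<in>p. c0 (induced_partition s B)) + (\<Sum>B\<in>p. inversions B (block_min s)))"
    by (simp add: sum.distrib[symmetric] dvd_sum)
  ultimately have "even (c0 s + (c0 p + (\<Sum>B\<in>p. c0 (induced_partition s B))))"
    by (simp only: even_add) argo
  then have "(-1::'a) ^ c0 s = (-1) ^ (c0 p + (\<Sum>B\<in>p. c0 (induced_partition s B)))"
    by (rule neg_one_power_eqI)
  then show ?thesis by (simp add: power_add power_sum)
qed

end

section \<open>Odd elements of a graded probability space\<close>

lemma prod_list_eq_zeroI: "(0::'a::semiring_1) \<in> set xs \<Longrightarrow> prod_list xs = 0"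
  by (induction xs) auto

locale graded_space =
  fixes sm :: "complex \<Rightarrow> 'a::ring_1 \<Rightarrow> 'a" and gam :: "'a \<Rightarrow> 'a" and phi :: "'a \<Rightarrow> complex"
  assumes graded_ncps: "graded_ncps sm gam phi"
begin

lemma gam_mult: "gam (x * y) = gam x * gam y"
  and gam_one: "gam 1 = 1"
  and gam_neq_id: "gam \<noteq> id"
  and phi_add: "phi (x + y) = phi x + phi y"
  and phi_one: "phi 1 = 1"
  and phi_gam: "phi (gam x) = phi x"
  using graded_ncps unfolding graded_ncps_def by blast+

lemma sm_add: "sm a (x + y) = sm a x + sm a y"
  using graded_ncps unfolding graded_ncps_def complex_algebra_def by simp

lemma sm_add_left: "sm (a + b) x = sm a x + sm b x"
  using graded_ncps unfolding graded_ncps_def complex_algebra_def by simp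

lemma sm_one: "sm 1 x = x"
  using graded_ncps unfolding graded_ncps_def complex_algebra_def by simp

lemma phi_zero: "phi 0 = 0"
  using phi_add[of 0 0] by simp

lemma phi_uminus: "phi (- x) = - phi x"
  using phi_add[of x "- x"] phi_zero by (simp add: eq_neg_iff_add_eq_0 add.commute)

text \<open>The complex scalars make \<open>2\<close> invertible.\<close>

lemma double_eq_zero_iff: "x + x = 0 \<longleftrightarrow> (x::'a) = 0"
proof
  assume "x + x = 0"
  have "sm (1/2) (x + x) = sm (1/2) x + sm (1/2) x" by (rule sm_add)
  also have "\<dots> = sm (1/2 + 1/2) x" by (rule sm_add_left[symmetric])
  also have "\<dots> = x" by (simp add: sm_one)
  finally show "x = 0"
    using \<open>x + x = 0\<close> sm_add[of "1/2" 0 0] by simp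
qed simp

lemma one_neq_zero: "(1::'a) \<noteq> 0"
proof
  assume "(1::'a) = 0"
  then have "x = 0" for x :: 'a
    by (metis mult_1_right mult_zero_right)
  then have "gam = id" by (intro ext) (metis id_apply)
  then show False using gam_neq_id by simp
qed

lemma odd_and_even_imp_zero: "gam x = - x \<Longrightarrow> gam x = x \<Longrightarrow> x = 0"
  using double_eq_zero_iff[of x] by (metis add.right_inverse)

lemma phi_odd: "gam x = - x \<Longrightarrow> phi x = 0"
  using phi_gam[of x] phi_uminus[of x] by simp

lemma gam_prod_list_odd:
  "(\<And>x. x \<in> set xs \<Longrightarrow> gam x = - x) \<Longrightarrow>
    gam (prod_list xs) = (if even (length xs) then prod_list xs else - prod_list xs)"
  by (induction xs) (simp_all add: gam_one gam_mult)

lemma phi_prod_list_odd_length: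
  "(\<And>x. x \<in> set xs \<Longrightarrow> gam x = - x) \<Longrightarrow> odd (length xs) \<Longrightarrow> phi (prod_list xs) = 0"
  using gam_prod_list_odd by (intro phi_odd) simp

text \<open>\<open>gdeg\<close> assigns degree \<open>0\<close> to the zero element, hence the hypothesis \<open>prod_list xs \<noteq> 0\<close>.\<close>

lemma gdeg_prod_list_odd:
  assumes "\<And>x. x \<in> set xs \<Longrightarrow> gam x = - x" and "prod_list xs \<noteq> 0"
  shows "gdeg gam (prod_list xs) = (if even (length xs) then 0 else 1)"
proof (cases "even (length xs)")
  case True
  then show ?thesis using gam_prod_list_odd[OF assms(1)] by (simp add: gdeg_def)
next
  case False
  then have odd: "gam (prod_list xs) = - prod_list xs"
    using gam_prod_list_odd[OF assms(1)] by simp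
  then have "gam (prod_list xs) \<noteq> prod_list xs"
    using odd_and_even_imp_zero[OF odd] assms(2) by blast
  then show ?thesis using False by (simp add: gdeg_def)
qed

end

section \<open>Products of copies in the graded tensor product\<close>

definition slot_product :: "('a::ring_1 \<times> nat) list \<Rightarrow> nat \<Rightarrow> 'a" where
  "slot_product ys k = prod_list (map fst (filter (\<lambda>y. snd y = k) ys))"

text \<open>The sign produced when the copies \<open>x\<^sup>(\<^sup>k\<^sup>)\<close> listed in \<open>ys\<close> are multiplied from left to
  right: an odd factor picks up one sign for every later slot whose accumulated product is odd.\<close>

definition sign_count :: "('a::ring_1 \<Rightarrow> 'a) \<Rightarrow> ('a \<times> nat) list \<Rightarrow> nat" where
  "sign_count gam ys = (\<Sum>j<length ys. if gdeg gam (fst (ys ! j)) = 1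
     then card {k. snd (ys ! j) < k \<and> gdeg gam (slot_product (take j ys) k) = 1} else 0)"

lemma slot_product_snoc:
  "slot_product (ys @ [(x, k)]) = (\<lambda>a. slot_product ys a * (if a = k then x else 1))"
  by (auto simp: slot_product_def)

lemma sign_count_snoc:
  "sign_count gam (ys @ [(x, k)]) = sign_count gam ys
     + (if gdeg gam x = 1 then card {a. k < a \<and> gdeg gam (slot_product ys a) = 1} else 0)"
proof -
  have "(\<Sum>j<length ys. if gdeg gam (fst ((ys @ [(x, k)]) ! j)) = 1
      then card {a. snd ((ys @ [(x, k)]) ! j) < a \<and> gdeg gam (slot_product (take j (ys @ [(x, k)])) a) = 1}
      else 0) = sign_count gam ys"
    unfolding sign_count_def by (intro sum.cong) (auto simp: nth_append)
  then show ?thesis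
    unfolding sign_count_def by (simp add: nth_append)
qed

lemma gt_mult_gt_copy:
  assumes "gam 1 = 1"
  shows "gt_mult gam (c, f) (gt_copy x k) =
     (c * (-1) ^ (if gdeg gam x = 1 then card {a. k < a \<and> gdeg gam (f a) = 1} else 0),
      \<lambda>a. f a * (if a = k then x else 1))"
proof -
  have "gdeg gam 1 = 0" using assms by (simp add: gdeg_def)
  then have "{(a, l). l < a \<and> gdeg gam (f a) = 1 \<and> gdeg gam (((\<lambda>_. 1)(k := x)) l) = 1}
     = (if gdeg gam x = 1 then (\<lambda>a. (a, k)) ` {a. k < a \<and> gdeg gam (f a) = 1} else {})"
    by auto
  then have "card {(a, l). l < a \<and> gdeg gam (f a) = 1 \<and> gdeg gam (((\<lambda>_. 1)(k := x)) l) = 1}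
     = (if gdeg gam x = 1 then card {a. k < a \<and> gdeg gam (f a) = 1} else 0)"
    by (simp add: card_image inj_on_def)
  then show ?thesis
    by (auto simp: gt_mult_def gt_copy_def)
qed

lemma gt_prod_gt_copies:
  assumes "gam 1 = 1"
  shows "gt_prod gam (map (\<lambda>(x, k). gt_copy x k) ys) = ((-1) ^ sign_count gam ys, slot_product ys)"
proof (induction ys rule: rev_induct)
  case Nil
  show ?case by (auto simp: gt_prod_def gt_one_def sign_count_def slot_product_def)
next
  case (snoc y ys)
  obtain x k where y: "y = (x, k)" by (cases y)
  have "gt_prod gam (map (\<lambda>(x, k). gt_copy x k) (ys @ [y]))
      = gt_mult gam ((-1) ^ sign_count gam ys, slot_product ys) (gt_copy x k)"
    using snoc by (simp add: gt_prod_def y)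
  also have "\<dots> = ((-1) ^ sign_count gam (ys @ [y]), slot_product (ys @ [y]))"
    unfolding gt_mult_gt_copy[of gam, OF assms] y sign_count_snoc slot_product_snoc power_add by simp
  finally show ?case .
qed

definition block_product :: "(nat \<Rightarrow> 'a::monoid_mult) \<Rightarrow> nat set \<Rightarrow> 'a" where
  "block_product X B = prod_list (map X (sorted_list_of_set B))"

definition partition_copies :: "nat \<Rightarrow> nat set set \<Rightarrow> (nat \<Rightarrow> 'a) \<Rightarrow> ('a \<times> nat) list" where
  "partition_copies n p X = map (\<lambda>j. (X j, block_min p j)) [1..<n+1]"

lemma slot_product_partition_copies:
  "slot_product (partition_copies n p X) k = prod_list (map X (filter (\<lambda>j. block_min p j = k) [1..<n+1]))"
  by (simp add: slot_product_def partition_copies_def filter_map o_def)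

lemma take_partition_copies:
  "k \<le> n \<Longrightarrow> take k (partition_copies n p X) = partition_copies k p X"
  by (simp add: partition_copies_def take_map take_upt del: upt_Suc)

lemma nth_partition_copies:
  "k < n \<Longrightarrow> partition_copies n p X ! k = (X (Suc k), block_min p (Suc k))"
  by (simp add: partition_copies_def nth_upt del: upt_Suc)

context
  fixes n :: nat and p :: "nat set set"
  assumes p: "p \<in> set_partitions n"
begin

lemma filter_block_min_Min:
  assumes "B \<in> p"
  shows "filter (\<lambda>j. block_min p j = Min B) [1..<n+1] = sorted_list_of_set B"
proof (rule sorted_distinct_set_unique)
  have "set (filter (\<lambda>j. block_min p j = Min B) [1..<n+1])
      = {j\<in>{1..n}. block_min p j = block_min p (Min B)}"
    using block_min_eq[OF p assms Min_block_in[OF p assms]] by (auto simp del: upt_Suc)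
  also have "\<dots> = B"
    by (rule block_min_fibre[OF p assms Min_block_in[OF p assms]])
  finally show "set (filter (\<lambda>j. block_min p j = Min B) [1..<n+1]) = set (sorted_list_of_set B)"
    using set_partition_block_finite[OF p assms] by simp
qed (simp_all del: upt_Suc add: sorted_wrt_filter)

lemma filter_block_min_other:
  assumes "k \<notin> Min ` p"
  shows "filter (\<lambda>j. block_min p j = k) [1..<n+1] = []"
proof -
  have "block_min p j \<noteq> k" if "j \<in> set [1..<n+1]" for j
  proof -
    have "j \<in> {1..n}" using that by (auto simp del: upt_Suc)
    then show ?thesis
      using assms block_of_in[OF set_partitions_partition_on[OF p]] by (auto simp: block_min_def)
  qed
  then show ?thesis by (simp only: filter_empty_conv) blast
qed

lemma inj_on_Min_partition: "inj_on Min p"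
  using Min_block_in[OF p] partition_on_same_block[OF set_partitions_partition_on[OF p]]
  by (metis inj_onI)

end

context graded_space
begin

lemma phi_part_eq_sign_count:
  assumes p: "p \<in> set_partitions n"
  shows "phi_part gam phi n p X
    = (-1) ^ sign_count gam (partition_copies n p X) * (\<Prod>B\<in>p. phi (block_product X B))"
proof -
  let ?ys = "partition_copies n p X"
  have slot_Min: "slot_product ?ys (Min B) = block_product X B" if "B \<in> p" for B
    unfolding slot_product_partition_copies filter_block_min_Min[OF p that] block_product_def ..
  have slot_other: "slot_product ?ys k = 1" if "k \<notin> Min ` p" for k
    unfolding slot_product_partition_copies filter_block_min_other[OF p that] by simp
  have "phi_part gam phi n p X = gt_state phi ((-1) ^ sign_count gam ?ys, slot_product ?ys)"
    unfolding phi_part_def gt_prod_gt_copies[of gam, OF gam_one, symmetric]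
    by (simp add: partition_copies_def block_min_def o_def)
  also have "\<dots> = (-1) ^ sign_count gam ?ys * (\<Prod>k\<in>Min ` p. phi (slot_product ?ys k))"
    unfolding gt_state_def using slot_other phi_one finite_set_partition[OF p]
    by (auto intro!: prod.mono_neutral_left)
  also have "(\<Prod>k\<in>Min ` p. phi (slot_product ?ys k)) = (\<Prod>B\<in>p. phi (block_product X B))"
    by (simp add: prod.reindex[OF inj_on_Min_partition[OF p]] slot_Min)
  finally show ?thesis .
qed

context
  fixes n :: nat and X :: "nat \<Rightarrow> 'a" and p :: "nat set set"
  assumes odd: "\<And>i. i \<in> {1..n} \<Longrightarrow> gam (X i) = - X i" and p: "p \<in> set_partitions n"
begin

lemma odd_block_factors:
  assumes "B \<in> p" "x \<in> set (map X (sorted_list_of_set B))"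
  shows "gam x = - x"
proof -
  obtain i where "i \<in> B" "x = X i"
    using assms set_partition_block_finite[OF p] by auto
  then show ?thesis
    using odd set_partition_block_subset[OF p assms(1)] by blast
qed

lemma even_card_block_if_phi_nonzero:
  assumes "B \<in> p" "phi (block_product X B) \<noteq> 0"
  shows "even (card B)"
proof (rule ccontr)
  assume "odd (card B)"
  then have "phi (prod_list (map X (sorted_list_of_set B))) = 0"
    using odd_block_factors[OF assms(1)] by (intro phi_prod_list_odd_length) auto
  then show False using assms(2) by (simp add: block_product_def)
qed

lemma gdeg_slot_product_prefix:
  assumes nonzero: "\<And>B. B \<in> p \<Longrightarrow> block_product X B \<noteq> 0" and "k \<le> n"
  shows "gdeg gam (slot_product (partition_copies k p X) a)
    = (if even (card {i\<in>{1..k}. block_min p i = a}) then 0 else 1)"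
proof -
  define prefix where "prefix = filter (\<lambda>i. block_min p i = a) [1..<k+1]"
  define suffix where "suffix = filter (\<lambda>i. block_min p i = a) [k+1..<n+1]"
  have "[1..<n+1] = [1..<k+1] @ [k+1..<n+1]"
    using upt_add_eq_append[of 1 "k+1" "n-k"] \<open>k \<le> n\<close> by (simp del: upt_Suc)
  then have "slot_product (partition_copies n p X) a = prod_list (map X prefix) * prod_list (map X suffix)"
    unfolding slot_product_partition_copies prefix_def suffix_def by (simp del: upt_Suc)
  moreover have "slot_product (partition_copies n p X) a \<noteq> 0"
  proof (cases "a \<in> Min ` p")
    case True
    then obtain B where B: "B \<in> p" "a = Min B" by blast
    then show ?thesis
      unfolding B(2) slot_product_partition_copies filter_block_min_Min[OF p B(1)]
      using nonzero[OF B(1)] by (simp add: block_product_def)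
  next
    case False
    then show ?thesis
      unfolding slot_product_partition_copies filter_block_min_other[OF p False] using one_neq_zero by simp
  qed
  ultimately have "prod_list (map X prefix) \<noteq> 0" by auto
  moreover have "gam x = - x" if "x \<in> set (map X prefix)" for x
    using that odd \<open>k \<le> n\<close> by (auto simp: prefix_def)
  moreover have "length (map X prefix) = card {i\<in>{1..k}. block_min p i = a}"
    by (simp add: prefix_def distinct_length_filter Int_def atLeastLessThanSuc_atLeastAtMost conj_commute
        del: upt_Suc)
  ultimately show ?thesis
    using gdeg_prod_list_odd[of "map X prefix"]
    by (simp add: slot_product_partition_copies prefix_def del: upt_Suc)
qed

lemma sign_count_parity:
  assumes nonzero: "\<And>B. B \<in> p \<Longrightarrow> block_product X B \<noteq> 0"
  shows "even (sign_count gam (partition_copies n p X) + inversions {1..n} (block_min p))"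
proof -
  have gdeg_X: "gdeg gam (X i) = 1" if "i \<in> {1..n}" for i
  proof -
    have part: "partition_on {1..n} p" by (rule set_partitions_partition_on[OF p])
    define B where "B = block_of p i"
    have B: "B \<in> p" "i \<in> B"
      unfolding B_def using block_of_in[OF part that] mem_block_of[OF part that] by simp_all
    then have "X i \<in> set (map X (sorted_list_of_set B))"
      using set_partition_block_finite[OF p B(1)] by simp
    then have "X i \<noteq> 0"
      using nonzero[OF B(1)] prod_list_eq_zeroI[of "map X (sorted_list_of_set B)"]
      unfolding block_product_def by auto
    then show ?thesis
      using odd_and_even_imp_zero[OF odd[OF that]] unfolding gdeg_def by auto
  qed
  have "sign_count gam (partition_copies n p X)
      = (\<Sum>k<n. card {a. block_min p (Suc k) < a \<and> odd (card {i\<in>{1..k}. block_min p i = a})})"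
    unfolding sign_count_def
  proof (rule sum.cong)
    fix k assume "k \<in> {..<n}"
    then show "(if gdeg gam (fst (partition_copies n p X ! k)) = 1
        then card {a. snd (partition_copies n p X ! k) < a
          \<and> gdeg gam (slot_product (take k (partition_copies n p X)) a) = 1} else 0)
      = card {a. block_min p (Suc k) < a \<and> odd (card {i\<in>{1..k}. block_min p i = a})}"
      using gdeg_X[of "Suc k"] gdeg_slot_product_prefix[OF nonzero, of k]
      by (auto simp: nth_partition_copies take_partition_copies intro!: arg_cong[where f = card])
  qed (simp add: partition_copies_def)
  moreover have "even (card {a. block_min p (Suc k) < a \<and> odd (card {i\<in>{1..k}. block_min p i = a})}
      + card {i\<in>{1..k}. block_min p (Suc k) < block_min p i})" for k
    by (rule card_odd_fibres_parity) simp
  ultimately show ?thesis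
    unfolding inversions_eq_sum by (simp add: sum.distrib[symmetric] dvd_sum)
qed

theorem phi_part_odd:
  "phi_part gam phi n p X = (-1) ^ c0 p * (\<Prod>B\<in>p. phi (block_product X B))"
proof (cases "\<forall>B\<in>p. phi (block_product X B) \<noteq> 0")
  case True
  then have "even (sign_count gam (partition_copies n p X) + inversions {1..n} (block_min p))"
    by (intro sign_count_parity) (auto simp: phi_zero)
  moreover have "even (c0 p + inversions {1..n} (block_min p))"
    using True by (intro even_c0_plus_inversions[OF p] even_card_block_if_phi_nonzero) auto
  ultimately have "(-1::complex) ^ sign_count gam (partition_copies n p X) = (-1) ^ c0 p"
    by (intro neg_one_power_eqI) presburger
  then show ?thesis
    by (simp add: phi_part_eq_sign_count[OF p])
next
  case False
  then show ?thesis
    using finite_set_partition[OF p] by (auto simp: phi_part_eq_sign_count[OF p])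
qed

end

end

section \<open>Factorization over the blocks of a coarser partition\<close>

lemma block_product_rank:
  assumes "finite B" "C \<subseteq> B"
  shows "block_product (\<lambda>t. X (unrank B t)) (rank B ` C) = block_product X C"
proof -
  have "finite C" using assms finite_subset by blast
  have sorted: "sorted_list_of_set (rank B ` C) = map (rank B) (sorted_list_of_set C)"
    using monotone_on_subset[OF strict_mono_on_rank[OF assms(1)] assms(2)] \<open>finite C\<close>
    by (intro sorted_list_of_set_strict_mono_on_image)
  have "map (\<lambda>c. X (unrank B (rank B c))) (sorted_list_of_set C) = map X (sorted_list_of_set C)"
    using unrank_rank[OF assms(1)] assms(2) \<open>finite C\<close> by (intro map_cong) auto
  then show ?thesis
    unfolding block_product_def sorted map_map o_def by (rule arg_cong)
qed

context
  fixes n :: nat and p s :: "nat set set"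
  assumes p: "p \<in> set_partitions n" and s: "s \<in> set_partitions n" and refines: "refines s p"
begin

lemma prod_refinement: "(\<Prod>C\<in>s. f C) = (\<Prod>B\<in>p. \<Prod>C\<in>{C\<in>s. C \<subseteq> B}. f C)"
proof -
  have "s = (\<Union>B\<in>p. {C\<in>s. C \<subseteq> B})"
    using refines unfolding Defs.refines_def by blast
  moreover have "{C\<in>s. C \<subseteq> B} \<inter> {C\<in>s. C \<subseteq> B'} = {}" if "B \<in> p" "B' \<in> p" "B \<noteq> B'" for B B'
    using that refines_unique_block[OF p s] by blast
  ultimately show ?thesis
    using finite_set_partition[OF p] finite_set_partition[OF s]
    by (subst prod.UNION_disjoint[symmetric]) auto
qed

end

context graded_space
begin

lemma phi_part_induced_partition:
  assumes odd: "\<And>i. i \<in> {1..n} \<Longrightarrow> gam (X i) = - X i"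
    and p: "p \<in> set_partitions n" and s: "s \<in> set_partitions n" "refines s p" and B: "B \<in> p"
  shows "phi_part gam phi (card B) (induced_partition s B) (\<lambda>t. X (unrank B t))
    = (-1) ^ c0 (induced_partition s B) * (\<Prod>C\<in>{C\<in>s. C \<subseteq> B}. phi (block_product X C))"
proof -
  have fin: "finite B" by (rule set_partition_block_finite[OF p B])
  have "gam (X (unrank B t)) = - X (unrank B t)" if "t \<in> {1..card B}" for t
    using odd unrank_in[OF fin that] set_partition_block_subset[OF p B] by blast
  then have "phi_part gam phi (card B) (induced_partition s B) (\<lambda>t. X (unrank B t))
      = (-1) ^ c0 (induced_partition s B)
        * (\<Prod>D\<in>induced_partition s B. phi (block_product (\<lambda>t. X (unrank B t)) D))"
    by (rule phi_part_odd[OF _ induced_partition_in[OF p s B]])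
  also have "(\<Prod>D\<in>induced_partition s B. phi (block_product (\<lambda>t. X (unrank B t)) D))
      = (\<Prod>C\<in>{C\<in>s. C \<subseteq> B}. phi (block_product X C))"
  proof -
    have "inj_on ((`) (rank B)) {C\<in>s. C \<subseteq> B}"
      using inj_on_image_eq_iff[OF strict_mono_on_imp_inj_on[OF strict_mono_on_rank[OF fin]]]
      by (auto intro: inj_onI)
    then show ?thesis
      unfolding induced_partition_def by (simp add: prod.reindex block_product_rank[OF fin])
  qed
  finally show ?thesis .
qed

lemma phi_part_refinement:
  assumes odd: "\<And>i. i \<in> {1..n} \<Longrightarrow> gam (X i) = - X i"
    and p: "p \<in> set_partitions n" and s: "s \<in> set_partitions n" "refines s p"
  shows "phi_part gam phi n s X
    = (-1) ^ c0 p * (\<Prod>B\<in>p. phi_part gam phi (card B) (induced_partition s B) (\<lambda>t. X (unrank B t)))"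
proof -
  have "phi_part gam phi n s X = (-1) ^ c0 s * (\<Prod>C\<in>s. phi (block_product X C))"
    by (rule phi_part_odd[OF odd s(1)])
  moreover have "(\<Prod>B\<in>p. phi_part gam phi (card B) (induced_partition s B) (\<lambda>t. X (unrank B t)))
      = (\<Prod>B\<in>p. (-1) ^ c0 (induced_partition s B) * (\<Prod>C\<in>{C\<in>s. C \<subseteq> B}. phi (block_product X C)))"
    by (rule prod.cong[OF refl]) (rule phi_part_induced_partition[OF odd p s])
  then have "(-1) ^ c0 p * (\<Prod>B\<in>p. phi_part gam phi (card B) (induced_partition s B) (\<lambda>t. X (unrank B t)))
      = (-1) ^ c0 p * (\<Prod>B\<in>p. (-1) ^ c0 (induced_partition s B)) * (\<Prod>C\<in>s. phi (block_product X C))"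
    by (simp add: prod.distrib prod_refinement[OF p s])
  moreover have "(-1::complex) ^ c0 s = (-1) ^ c0 p * (\<Prod>B\<in>p. (-1) ^ c0 (induced_partition s B))"
    if "(\<Prod>C\<in>s. phi (block_product X C)) \<noteq> 0"
  proof (rule c0_sign_refinement[OF p s])
    fix C assume "C \<in> s"
    then have "phi (block_product X C) \<noteq> 0"
      using that finite_set_partition[OF s(1)] by auto
    then show "even (card C)"
      using even_card_block_if_phi_nonzero[of n X s C] odd s(1) \<open>C \<in> s\<close> by blast
  qed
  ultimately show ?thesis by (cases "(\<Prod>C\<in>s. phi (block_product X C)) = 0") simp_all
qed

lemma phi_part_times_moebius:
  assumes odd: "\<And>i. i \<in> {1..n} \<Longrightarrow> gam (X i) = - X i"
    and p: "p \<in> set_partitions n" and s: "s \<in> set_partitions n" "refines s p"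
  shows "phi_part gam phi n s X * of_int (moebius (set_partitions n) refines s p)
    = (-1) ^ c0 p * (\<Prod>B\<in>p. phi_part gam phi (card B) (induced_partition s B) (\<lambda>t. X (unrank B t))
        * of_int (moebius (set_partitions (card B)) refines (induced_partition s B) {{1..card B}}))"
  using phi_part_refinement[OF odd p s] moebius_set_partitions_factor[OF p s]
  by (simp add: of_int_prod prod.distrib mult.assoc)

theorem K_part_odd:
  assumes odd: "\<And>i. i \<in> {1..n} \<Longrightarrow> gam (X i) = - X i" and p: "p \<in> set_partitions n"
  shows "K_part gam phi n p X = (-1) ^ c0 p * (\<Prod>B\<in>p. K_num gam phi (card B) (\<lambda>t. X (unrank B t)))"
proof -
  define F where "F B u = phi_part gam phi (card B) u (\<lambda>t. X (unrank B t))
      * of_int (moebius (set_partitions (card B)) refines u {{1..card B}})" for B u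
  have "K_part gam phi n p X
      = (\<Sum>s\<in>{s\<in>set_partitions n. refines s p}. (-1) ^ c0 p * (\<Prod>B\<in>p. F B (restrict (induced_partition s) p B)))"
    unfolding K_part_def
  proof (rule sum.cong[OF refl])
    fix s assume "s \<in> {s\<in>set_partitions n. refines s p}"
    then have s: "s \<in> set_partitions n" "refines s p" by simp_all
    show "phi_part gam phi n s X * of_int (moebius (set_partitions n) refines s p)
        = (-1) ^ c0 p * (\<Prod>B\<in>p. F B (restrict (induced_partition s) p B))"
      using phi_part_times_moebius[OF odd p s] by (simp add: F_def cong: prod.cong)
  qed
  also have "\<dots> = (\<Sum>t\<in>PiE p (\<lambda>B. set_partitions (card B)). (-1) ^ c0 p * (\<Prod>B\<in>p. F B (t B)))"
    by (rule sum.reindex_bij_betw[OF bij_betw_induced_partitions[OF p]])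
  also have "\<dots> = (-1) ^ c0 p * (\<Prod>B\<in>p. \<Sum>u\<in>set_partitions (card B). F B u)"
    using finite_set_partition[OF p] finite_set_partitions
    by (simp add: sum_distrib_left[symmetric] prod_sum_PiE)
  also have "\<dots> = (-1) ^ c0 p * (\<Prod>B\<in>p. K_num gam phi (card B) (\<lambda>t. X (unrank B t)))"
  proof -
    have all: "{u\<in>set_partitions (card B). refines u {{1..card B}}} = set_partitions (card B)" for B
      using set_partition_block_subset by (auto simp: Defs.refines_def)
    show ?thesis unfolding K_num_def K_part_def all F_def ..
  qed
  finally show ?thesis .
qed

end

theorem proposition4p25:
  fixes sm :: "complex \<Rightarrow> 'a::ring_1 \<Rightarrow> 'a" and gam :: "'a \<Rightarrow> 'a" and phi :: "'a \<Rightarrow> complex"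
    and n :: nat and X :: "nat \<Rightarrow> 'a" and p :: "nat set set"
  assumes "graded_ncps sm gam phi"
    and "\<forall>i\<in>{1..n}. gam (X i) = - X i"
    and "p \<in> set_partitions n"
  shows "phi_part gam phi n p X =
           (-1) ^ c0 p * (\<Prod>B\<in>p. phi (prod_list (map X (sorted_list_of_set B))))
       \<and> K_part gam phi n p X =
           (-1) ^ c0 p * (\<Prod>B\<in>p. K_num gam phi (card B) (\<lambda>t. X (sorted_list_of_set B ! (t - 1))))"
proof -
  interpret graded_space sm gam phi
    by (rule graded_space.intro) (fact assms(1))
  have odd: "\<And>i. i \<in> {1..n} \<Longrightarrow> gam (X i) = - X i"
    using assms(2) by blast
  show ?thesis
    using phi_part_odd[OF odd assms(3)] K_part_odd[OF odd assms(3)]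
    by (simp add: block_product_def unrank_def)
qed

end
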